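(* Let $\mathcal{M}$ be an $n$-abelian category, let $X^0\xrightarrow{d_X^0}X^1\to\cdots\xrightarrow{d_X^{n-1}}X^n\xrightarrow{d_X^n}X^{n+1}$ be an $n$-exact sequence, let $Y^0\xrightarrow{d_Y^0}Y^1\to\cdots\xrightarrow{d_Y^{n-1}}Y^n$ be a complex with $d_Y^0$ a monomorphism, and let $(f^0,\dots,f^n)$ be a morphism of complexes from $X^0\to\cdots\to X^n$ to $Y^0\to\cdots\to Y^n$. The following are equivalent: (i) $(f^0,\dots,f^n)$ is an $n$-pushout diagram; (ii) its mapping cone is an $n$-exact sequence; (iii) it is both an $n$-pushout and an $n$-pullback diagram; (iv) there exists a morphism $d_Y^n:Y^n\to X^{n+1}$ with $d_Y^nf^n=d_X^n$ such that $Y^0\xrightarrow{d_Y^0}\cdots\xrightarrow{d_Y^{n-1}}Y^n\xrightarrow{d_Y^n}X^{n+1}$ is an $n$-exact sequence.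
   Context: A complex $X^0\xrightarrow{d^0}\cdots\xrightarrow{d^n}X^{n+1}$ is right $n$-exact if $0\to\mathcal{M}(X^{n+1},W)\to\cdots\to\mathcal{M}(X^0,W)$ is exact for all $W$, left $n$-exact if $0\to\mathcal{M}(W,X^0)\to\cdots\to\mathcal{M}(W,X^{n+1})$ is exact for all $W$, $n$-exact if both. For a morphism of complexes $f=(f^0,\dots,f^n)$ from $X^0\xrightarrow{d_X^0}\cdots\to X^n$ to $Y^0\xrightarrow{d_Y^0}\cdots\to Y^n$, its mapping cone is $X^0\to X^1\oplus Y^0\to\cdots\to X^n\oplus Y^{n-1}\to Y^n$ with differentials $\begin{pmatrix}-d_X^k&0\\ f^k&d_Y^{k-1}\end{pmatrix}$ ($d_X^n=0$, $d_Y^{-1}=0$ in this formula); $f$ is an $n$-pushout diagram if its mapping cone is right $n$-exact and an $n$-pullback diagram if its mapping cone is left $n$-exact. An $n$-abelian category is an idempotent complete additive category in which every morphism has an $n$-kernel and an $n$-cokernel, and in which every monomorphism (resp. epimorphism) together with any of its $n$-cokernels (resp. $n$-kernels) forms an $n$-exact sequence. *)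

theory Defs
  imports Main
begin

text \<open>An additive category presented with untyped morphisms: objects of type 'o,
morphisms of type 'm, hom-sets Hom A B, composition cmp g f (= g after f),
identities, zero morphisms, addition and negation on hom-sets, and a chosen
biproduct bp A B with injections in1, in2 and projections pr1, pr2.\<close>

record ('o, 'm) addcat =
  Obj :: "'o set"
  Hom :: "'o \<Rightarrow> 'o \<Rightarrow> 'm set"
  cmp :: "'m \<Rightarrow> 'm \<Rightarrow> 'm"
  idm :: "'o \<Rightarrow> 'm"
  zer :: "'o \<Rightarrow> 'o \<Rightarrow> 'm"
  add :: "'m \<Rightarrow> 'm \<Rightarrow> 'm"
  neg :: "'m \<Rightarrow> 'm"
  bp  :: "'o \<Rightarrow> 'o \<Rightarrow> 'o"
  in1 :: "'o \<Rightarrow> 'o \<Rightarrow> 'm"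
  in2 :: "'o \<Rightarrow> 'o \<Rightarrow> 'm"
  pr1 :: "'o \<Rightarrow> 'o \<Rightarrow> 'm"
  pr2 :: "'o \<Rightarrow> 'o \<Rightarrow> 'm"

definition is_category :: "('o, 'm, 'x) addcat_scheme \<Rightarrow> bool" where
  "is_category C \<longleftrightarrow>
     (\<forall>A\<in>Obj C. \<forall>B\<in>Obj C. \<forall>D\<in>Obj C. \<forall>f\<in>Hom C A B. \<forall>g\<in>Hom C B D. cmp C g f \<in> Hom C A D) \<and>
     (\<forall>A\<in>Obj C. \<forall>B\<in>Obj C. \<forall>D\<in>Obj C. \<forall>E\<in>Obj C. \<forall>f\<in>Hom C A B. \<forall>g\<in>Hom C B D. \<forall>h\<in>Hom C D E.
        cmp C h (cmp C g f) = cmp C (cmp C h g) f) \<and>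
     (\<forall>A\<in>Obj C. idm C A \<in> Hom C A A) \<and>
     (\<forall>A\<in>Obj C. \<forall>B\<in>Obj C. \<forall>f\<in>Hom C A B. cmp C f (idm C A) = f \<and> cmp C (idm C B) f = f)"

definition is_preadditive :: "('o, 'm, 'x) addcat_scheme \<Rightarrow> bool" where
  "is_preadditive C \<longleftrightarrow> is_category C \<and>
     (\<forall>A\<in>Obj C. \<forall>B\<in>Obj C.
        zer C A B \<in> Hom C A B \<and>
        (\<forall>f\<in>Hom C A B. \<forall>g\<in>Hom C A B. add C f g \<in> Hom C A B) \<and>
        (\<forall>f\<in>Hom C A B. neg C f \<in> Hom C A B) \<and>
        (\<forall>f\<in>Hom C A B. \<forall>g\<in>Hom C A B. \<forall>h\<in>Hom C A B. add C (add C f g) h = add C f (add C g h)) \<and>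
        (\<forall>f\<in>Hom C A B. \<forall>g\<in>Hom C A B. add C f g = add C g f) \<and>
        (\<forall>f\<in>Hom C A B. add C f (zer C A B) = f) \<and>
        (\<forall>f\<in>Hom C A B. add C f (neg C f) = zer C A B)) \<and>
     (\<forall>A\<in>Obj C. \<forall>B\<in>Obj C. \<forall>D\<in>Obj C. \<forall>f\<in>Hom C A B. \<forall>f'\<in>Hom C A B. \<forall>g\<in>Hom C B D. \<forall>g'\<in>Hom C B D.
        cmp C g (add C f f') = add C (cmp C g f) (cmp C g f') \<and>
        cmp C (add C g g') f = add C (cmp C g f) (cmp C g' f))"

definition is_additive :: "('o, 'm, 'x) addcat_scheme \<Rightarrow> bool" where
  "is_additive C \<longleftrightarrow> is_preadditive C \<and>
     (\<exists>Z\<in>Obj C. \<forall>A\<in>Obj C. Hom C A Z = {zer C A Z} \<and> Hom C Z A = {zer C Z A}) \<and>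
     (\<forall>A\<in>Obj C. \<forall>B\<in>Obj C. bp C A B \<in> Obj C \<and>
        in1 C A B \<in> Hom C A (bp C A B) \<and> in2 C A B \<in> Hom C B (bp C A B) \<and>
        pr1 C A B \<in> Hom C (bp C A B) A \<and> pr2 C A B \<in> Hom C (bp C A B) B \<and>
        cmp C (pr1 C A B) (in1 C A B) = idm C A \<and>
        cmp C (pr2 C A B) (in2 C A B) = idm C B \<and>
        cmp C (pr1 C A B) (in2 C A B) = zer C B A \<and>
        cmp C (pr2 C A B) (in1 C A B) = zer C A B \<and>
        add C (cmp C (in1 C A B) (pr1 C A B)) (cmp C (in2 C A B) (pr2 C A B)) = idm C (bp C A B))"

definition is_mono :: "('o, 'm, 'x) addcat_scheme \<Rightarrow> 'o \<Rightarrow> 'o \<Rightarrow> 'm \<Rightarrow> bool" where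
  "is_mono C A B f \<longleftrightarrow> f \<in> Hom C A B \<and>
     (\<forall>W\<in>Obj C. \<forall>g\<in>Hom C W A. \<forall>h\<in>Hom C W A. cmp C f g = cmp C f h \<longrightarrow> g = h)"

definition is_epi :: "('o, 'm, 'x) addcat_scheme \<Rightarrow> 'o \<Rightarrow> 'o \<Rightarrow> 'm \<Rightarrow> bool" where
  "is_epi C A B f \<longleftrightarrow> f \<in> Hom C A B \<and>
     (\<forall>W\<in>Obj C. \<forall>g\<in>Hom C B W. \<forall>h\<in>Hom C B W. cmp C g f = cmp C h f \<longrightarrow> g = h)"

definition has_kernel :: "('o, 'm, 'x) addcat_scheme \<Rightarrow> 'o \<Rightarrow> 'o \<Rightarrow> 'm \<Rightarrow> bool" where
  "has_kernel C A B e \<longleftrightarrow> (\<exists>K\<in>Obj C. \<exists>k\<in>Hom C K A. cmp C e k = zer C K B \<and>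
     (\<forall>W\<in>Obj C. \<forall>g\<in>Hom C W A. cmp C e g = zer C W B \<longrightarrow>
        (\<exists>h\<in>Hom C W K. cmp C k h = g \<and> (\<forall>h'\<in>Hom C W K. cmp C k h' = g \<longrightarrow> h' = h))))"

definition idempotent_complete :: "('o, 'm, 'x) addcat_scheme \<Rightarrow> bool" where
  "idempotent_complete C \<longleftrightarrow>
     (\<forall>A\<in>Obj C. \<forall>e\<in>Hom C A A. cmp C e e = e \<longrightarrow> has_kernel C A A e)"

definition is_complex :: "('o, 'm, 'x) addcat_scheme \<Rightarrow> nat \<Rightarrow> (nat \<Rightarrow> 'o) \<Rightarrow> (nat \<Rightarrow> 'm) \<Rightarrow> bool" where
  "is_complex C m X d \<longleftrightarrow> (\<forall>k\<le>m. X k \<in> Obj C) \<and> (\<forall>k<m. d k \<in> Hom C (X k) (X (Suc k))) \<and>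
     (\<forall>k. Suc k < m \<longrightarrow> cmp C (d (Suc k)) (d k) = zer C (X k) (X (Suc (Suc k))))"

text \<open>Right exactness: 0 \<rightarrow> M(X m, W) \<rightarrow> ... \<rightarrow> M(X 0, W) exact for all W
(exactness at M(X m,W), ..., M(X 1,W)).\<close>

definition right_exact :: "('o, 'm, 'x) addcat_scheme \<Rightarrow> nat \<Rightarrow> (nat \<Rightarrow> 'o) \<Rightarrow> (nat \<Rightarrow> 'm) \<Rightarrow> bool" where
  "right_exact C m X d \<longleftrightarrow> is_complex C m X d \<and>
     (\<forall>W\<in>Obj C.
        (\<forall>g\<in>Hom C (X m) W. cmp C g (d (m - 1)) = zer C (X (m - 1)) W \<longrightarrow> g = zer C (X m) W) \<and>
        (\<forall>k. 1 \<le> k \<and> k < m \<longrightarrow> (\<forall>g\<in>Hom C (X k) W. cmp C g (d (k - 1)) = zer C (X (k - 1)) W \<longrightarrow>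
            (\<exists>h\<in>Hom C (X (Suc k)) W. g = cmp C h (d k)))))"

definition left_exact :: "('o, 'm, 'x) addcat_scheme \<Rightarrow> nat \<Rightarrow> (nat \<Rightarrow> 'o) \<Rightarrow> (nat \<Rightarrow> 'm) \<Rightarrow> bool" where
  "left_exact C m X d \<longleftrightarrow> is_complex C m X d \<and>
     (\<forall>W\<in>Obj C.
        (\<forall>g\<in>Hom C W (X 0). cmp C (d 0) g = zer C W (X 1) \<longrightarrow> g = zer C W (X 0)) \<and>
        (\<forall>k. 1 \<le> k \<and> k < m \<longrightarrow> (\<forall>g\<in>Hom C W (X k). cmp C (d k) g = zer C W (X (Suc k)) \<longrightarrow>
            (\<exists>h\<in>Hom C W (X (k - 1)). g = cmp C (d (k - 1)) h))))"

definition right_n_exact where "right_n_exact C n X d \<longleftrightarrow> right_exact C (Suc n) X d"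
definition left_n_exact where "left_n_exact C n X d \<longleftrightarrow> left_exact C (Suc n) X d"
definition n_exact where "n_exact C n X d \<longleftrightarrow> left_n_exact C n X d \<and> right_n_exact C n X d"

definition is_n_kernel :: "('o, 'm, 'x) addcat_scheme \<Rightarrow> nat \<Rightarrow> 'o \<Rightarrow> 'o \<Rightarrow> 'm \<Rightarrow> (nat \<Rightarrow> 'o) \<Rightarrow> (nat \<Rightarrow> 'm) \<Rightarrow> bool" where
  "is_n_kernel C n A B f X d \<longleftrightarrow> X n = A \<and> X (Suc n) = B \<and> d n = f \<and> left_n_exact C n X d"

definition is_n_cokernel :: "('o, 'm, 'x) addcat_scheme \<Rightarrow> nat \<Rightarrow> 'o \<Rightarrow> 'o \<Rightarrow> 'm \<Rightarrow> (nat \<Rightarrow> 'o) \<Rightarrow> (nat \<Rightarrow> 'm) \<Rightarrow> bool" where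
  "is_n_cokernel C n A B f X d \<longleftrightarrow> X 0 = A \<and> X 1 = B \<and> d 0 = f \<and> right_n_exact C n X d"

definition n_abelian :: "('o, 'm, 'x) addcat_scheme \<Rightarrow> nat \<Rightarrow> bool" where
  "n_abelian C n \<longleftrightarrow> is_additive C \<and> idempotent_complete C \<and>
     (\<forall>A\<in>Obj C. \<forall>B\<in>Obj C. \<forall>f\<in>Hom C A B.
        (\<exists>X d. is_n_kernel C n A B f X d) \<and> (\<exists>X d. is_n_cokernel C n A B f X d)) \<and>
     (\<forall>A\<in>Obj C. \<forall>B\<in>Obj C. \<forall>f. is_mono C A B f \<longrightarrow>
        (\<forall>X d. is_n_cokernel C n A B f X d \<longrightarrow> n_exact C n X d)) \<and>
     (\<forall>A\<in>Obj C. \<forall>B\<in>Obj C. \<forall>f. is_epi C A B f \<longrightarrow>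
        (\<forall>X d. is_n_kernel C n A B f X d \<longrightarrow> n_exact C n X d))"

definition is_complex_morphism where
  "is_complex_morphism C n X dX Y dY f \<longleftrightarrow>
     (\<forall>k\<le>n. f k \<in> Hom C (X k) (Y k)) \<and>
     (\<forall>k<n. cmp C (f (Suc k)) (dX k) = cmp C (dY k) (f k))"

text \<open>Matrix morphism [[a, b], [c, e]] : A1 \<oplus> A2 \<rightarrow> B1 \<oplus> B2.\<close>

definition mat2 :: "('o, 'm, 'x) addcat_scheme \<Rightarrow> 'o \<Rightarrow> 'o \<Rightarrow> 'o \<Rightarrow> 'o \<Rightarrow> 'm \<Rightarrow> 'm \<Rightarrow> 'm \<Rightarrow> 'm \<Rightarrow> 'm" where
  "mat2 C A1 A2 B1 B2 a b c e =
     add C (add C (cmp C (in1 C B1 B2) (cmp C a (pr1 C A1 A2)))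
                  (cmp C (in1 C B1 B2) (cmp C b (pr2 C A1 A2))))
           (add C (cmp C (in2 C B1 B2) (cmp C c (pr1 C A1 A2)))
                  (cmp C (in2 C B1 B2) (cmp C e (pr2 C A1 A2))))"

text \<open>Mapping cone X 0 \<rightarrow> X 1 \<oplus> Y 0 \<rightarrow> ... \<rightarrow> X n \<oplus> Y (n-1) \<rightarrow> Y n (for n \<ge> 1).\<close>

definition cone_obj :: "('o, 'm, 'x) addcat_scheme \<Rightarrow> nat \<Rightarrow> (nat \<Rightarrow> 'o) \<Rightarrow> (nat \<Rightarrow> 'o) \<Rightarrow> nat \<Rightarrow> 'o" where
  "cone_obj C n X Y k =
     (if k = 0 then X 0 else if k \<le> n then bp C (X k) (Y (k - 1)) else Y n)"

definition cone_diff :: "('o, 'm, 'x) addcat_scheme \<Rightarrow> nat \<Rightarrow> (nat \<Rightarrow> 'o) \<Rightarrow> (nat \<Rightarrow> 'm) \<Rightarrow> (nat \<Rightarrow> 'o) \<Rightarrow> (nat \<Rightarrow> 'm) \<Rightarrow> (nat \<Rightarrow> 'm) \<Rightarrow> nat \<Rightarrow> 'm" where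
  "cone_diff C n X dX Y dY f k =
     (if k = 0 then
        add C (cmp C (in1 C (X 1) (Y 0)) (neg C (dX 0))) (cmp C (in2 C (X 1) (Y 0)) (f 0))
      else if k < n then
        mat2 C (X k) (Y (k - 1)) (X (Suc k)) (Y k)
             (neg C (dX k)) (zer C (Y (k - 1)) (X (Suc k))) (f k) (dY (k - 1))
      else
        add C (cmp C (f n) (pr1 C (X n) (Y (n - 1)))) (cmp C (dY (n - 1)) (pr2 C (X n) (Y (n - 1)))))"

definition n_pushout where
  "n_pushout C n X dX Y dY f \<longleftrightarrow> right_n_exact C n (cone_obj C n X Y) (cone_diff C n X dX Y dY f)"

definition n_pullback where
  "n_pullback C n X dX Y dY f \<longleftrightarrow> left_n_exact C n (cone_obj C n X Y) (cone_diff C n X dX Y dY f)"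

end

theory Submission
  imports Defs
begin

text \<open>In an \<open>n\<close>-abelian category a right \<open>n\<close>-exact sequence starting with a monomorphism is
\<open>n\<close>-exact, and dually a left \<open>n\<close>-exact sequence ending with an epimorphism is \<open>n\<close>-exact. The mapping
cone starts with a monomorphism because \<open>dX 0\<close> is one; this gives (i) \<open>\<Rightarrow>\<close> (ii), and (ii)
\<open>\<Leftrightarrow>\<close> (iii) holds by definition. For (iii) \<open>\<Rightarrow>\<close> (iv), right exactness of the cone factors
\<open>dX n \<cdot> p1 n\<close> through the last cone differential, which produces \<open>d\<^sub>Y\<^sup>n\<close>; right exactness
then transfers from the cone to \<open>Y 0 \<rightarrow> \<dots> \<rightarrow> Y n \<rightarrow> X (n + 1)\<close>, whose first map is \<open>dY 0\<close>.
For (iv) \<open>\<Rightarrow>\<close> (iii), a diagram chase using left exactness of \<open>X\<close> and of the extended \<open>Y\<close>-sequence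
shows that the cone is left \<open>n\<close>-exact, and right exactness of both makes the last cone differential
an epimorphism.\<close>

section \<open>Additive categories\<close>

locale additive_category =
  fixes C :: "('o, 'm, 'x) addcat_scheme"
  assumes additive: "is_additive C"
begin

abbreviation mcomp (infixr "\<cdot>" 75) where "h \<cdot> g \<equiv> cmp C h g"
abbreviation madd (infixl "\<oplus>" 65) where "g \<oplus> h \<equiv> add C g h"
abbreviation mneg ("\<ominus>_" [81] 80) where "\<ominus> g \<equiv> neg C g"

text \<open>The axioms constrain \<open>Hom C A B\<close> only for objects \<open>A\<close>, \<open>B\<close>, so a morphism is
always tracked together with its (object) domain and codomain.\<close>

definition hom :: "'o \<Rightarrow> 'o \<Rightarrow> 'm \<Rightarrow> bool" where
  "hom A B g \<longleftrightarrow> A \<in> Obj C \<and> B \<in> Obj C \<and> g \<in> Hom C A B"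

lemma homD: "hom A B g \<Longrightarrow> A \<in> Obj C" "hom A B g \<Longrightarrow> B \<in> Obj C" "hom A B g \<Longrightarrow> g \<in> Hom C A B"
  by (auto simp: hom_def)

lemma homI: "A \<in> Obj C \<Longrightarrow> B \<in> Obj C \<Longrightarrow> g \<in> Hom C A B \<Longrightarrow> hom A B g"
  by (auto simp: hom_def)

lemma preadditive: "is_preadditive C"
  using additive by (simp add: is_additive_def)

lemma category: "is_category C"
  using preadditive by (simp add: is_preadditive_def)

lemma comp_hom [intro]: "hom A B g \<Longrightarrow> hom B D h \<Longrightarrow> hom A D (h \<cdot> g)"
  using category unfolding is_category_def hom_def by blast

lemma comp_assoc: "hom A B g \<Longrightarrow> hom B D h \<Longrightarrow> hom D E k \<Longrightarrow> k \<cdot> (h \<cdot> g) = (k \<cdot> h) \<cdot> g"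
  using category unfolding is_category_def hom_def by blast

lemma comp_id_left: "hom A B g \<Longrightarrow> idm C B \<cdot> g = g"
  using category unfolding is_category_def hom_def by blast

lemma comp_id_right: "hom A B g \<Longrightarrow> g \<cdot> idm C A = g"
  using category unfolding is_category_def hom_def by blast

lemma id_hom [intro]: "A \<in> Obj C \<Longrightarrow> hom A A (idm C A)"
  using category unfolding is_category_def hom_def by blast

lemma zer_hom [intro]: "A \<in> Obj C \<Longrightarrow> B \<in> Obj C \<Longrightarrow> hom A B (zer C A B)"
  using preadditive unfolding is_preadditive_def hom_def by blast

lemma add_hom [intro]: "hom A B g \<Longrightarrow> hom A B h \<Longrightarrow> hom A B (g \<oplus> h)"
  using preadditive unfolding is_preadditive_def hom_def by blast

lemma neg_hom [intro]: "hom A B g \<Longrightarrow> hom A B (\<ominus> g)"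
  using preadditive unfolding is_preadditive_def hom_def by blast

lemma add_assoc: "hom A B g \<Longrightarrow> hom A B h \<Longrightarrow> hom A B k \<Longrightarrow> g \<oplus> h \<oplus> k = g \<oplus> (h \<oplus> k)"
  using preadditive unfolding is_preadditive_def hom_def by blast

lemma add_comm: "hom A B g \<Longrightarrow> hom A B h \<Longrightarrow> g \<oplus> h = h \<oplus> g"
  using preadditive unfolding is_preadditive_def hom_def by blast

lemma add_zero_right: "hom A B g \<Longrightarrow> g \<oplus> zer C A B = g"
  using preadditive unfolding is_preadditive_def hom_def by blast

lemma add_neg_right: "hom A B g \<Longrightarrow> g \<oplus> \<ominus> g = zer C A B"
  using preadditive unfolding is_preadditive_def hom_def by blast

lemma comp_distrib_left: "hom A B g \<Longrightarrow> hom A B g' \<Longrightarrow> hom B D h \<Longrightarrow> h \<cdot> (g \<oplus> g') = h \<cdot> g \<oplus> h \<cdot> g'"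
  using preadditive unfolding is_preadditive_def hom_def by blast

lemma comp_distrib_right: "hom A B g \<Longrightarrow> hom B D h \<Longrightarrow> hom B D h' \<Longrightarrow> (h \<oplus> h') \<cdot> g = h \<cdot> g \<oplus> h' \<cdot> g"
  using preadditive unfolding is_preadditive_def hom_def by blast

lemma add_zero_left: "hom A B g \<Longrightarrow> zer C A B \<oplus> g = g"
  by (metis add_comm add_zero_right homD(1,2) zer_hom)

lemma add_neg_left: "hom A B g \<Longrightarrow> \<ominus> g \<oplus> g = zer C A B"
  using add_comm[of A B "\<ominus> g" g] add_neg_right[of A B g] neg_hom[of A B g] by simp

lemma neg_unique:
  assumes "hom A B g" "hom A B h" "g \<oplus> h = zer C A B"
  shows "h = \<ominus> g"
proof -
  have "h = h \<oplus> (g \<oplus> \<ominus> g)" using assms by (simp add: add_neg_right add_zero_right)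
  also have "\<dots> = (h \<oplus> g) \<oplus> \<ominus> g" using assms by (simp add: add_assoc neg_hom)
  also have "\<dots> = \<ominus> g" using assms by (simp add: add_comm add_zero_left neg_hom)
  finally show ?thesis .
qed

lemma add_eq_zero_imp_neg: "hom A B u \<Longrightarrow> hom A B b \<Longrightarrow> b \<oplus> u = zer C A B \<Longrightarrow> b = \<ominus> u"
  using neg_unique[of A B u b] add_comm[of A B b u] by simp

lemma neg_add_cancel_left: "hom A B u \<Longrightarrow> hom A B b \<Longrightarrow> \<ominus> u \<oplus> (b \<oplus> u) = b"
  using add_comm[of A B b u] add_assoc[of A B "\<ominus> u" u b] add_neg_left[of A B u] add_zero_left[of A B b]
    neg_hom[of A B u]
  by simp

lemma add_idem_zero:
  assumes "hom A B g" "g \<oplus> g = g"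
  shows "g = zer C A B"
proof -
  have "g = g \<oplus> (g \<oplus> \<ominus> g)" using assms(1) by (simp add: add_neg_right add_zero_right)
  also have "\<dots> = (g \<oplus> g) \<oplus> \<ominus> g" using assms(1) by (simp add: add_assoc neg_hom)
  also have "\<dots> = zer C A B" using assms by (simp add: add_neg_right)
  finally show ?thesis .
qed

lemma comp_zero_right:
  assumes "hom B D h" "A \<in> Obj C"
  shows "h \<cdot> zer C A B = zer C A D"
proof -
  have z: "hom A B (zer C A B)" using assms homD by blast
  have "h \<cdot> zer C A B = h \<cdot> (zer C A B \<oplus> zer C A B)" using z by (simp add: add_zero_right)
  also have "\<dots> = h \<cdot> zer C A B \<oplus> h \<cdot> zer C A B" using z assms by (simp add: comp_distrib_left)
  finally show ?thesis using add_idem_zero[of A D "h \<cdot> zer C A B"] z assms by auto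
qed

lemma comp_zero_left:
  assumes "hom A B g" "D \<in> Obj C"
  shows "zer C B D \<cdot> g = zer C A D"
proof -
  have z: "hom B D (zer C B D)" using assms homD by blast
  have "zer C B D \<cdot> g = (zer C B D \<oplus> zer C B D) \<cdot> g" using z by (simp add: add_zero_right)
  also have "\<dots> = zer C B D \<cdot> g \<oplus> zer C B D \<cdot> g" using z assms by (simp add: comp_distrib_right)
  finally show ?thesis using add_idem_zero[of A D "zer C B D \<cdot> g"] z assms by auto
qed

lemma neg_comp:
  assumes "hom A B g" "hom B D h"
  shows "(\<ominus> h) \<cdot> g = \<ominus> (h \<cdot> g)"
proof -
  have "h \<cdot> g \<oplus> (\<ominus> h) \<cdot> g = (h \<oplus> \<ominus> h) \<cdot> g"
    using assms by (simp add: comp_distrib_right neg_hom)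
  also have "\<dots> = zer C A D" using assms by (simp add: add_neg_right comp_zero_left homD)
  finally show ?thesis using neg_unique assms by blast
qed

lemma comp_neg:
  assumes "hom A B g" "hom B D h"
  shows "h \<cdot> (\<ominus> g) = \<ominus> (h \<cdot> g)"
proof -
  have "h \<cdot> g \<oplus> h \<cdot> (\<ominus> g) = h \<cdot> (g \<oplus> \<ominus> g)"
    using assms by (simp add: comp_distrib_left neg_hom)
  also have "\<dots> = zer C A D" using assms by (simp add: add_neg_right comp_zero_right homD)
  finally show ?thesis using neg_unique assms by blast
qed

lemma neg_neg: "hom A B g \<Longrightarrow> \<ominus> (\<ominus> g) = g"
  using neg_unique[of A B "\<ominus> g" g] add_neg_left[of A B g] neg_hom by simp

lemma neg_zero: "A \<in> Obj C \<Longrightarrow> B \<in> Obj C \<Longrightarrow> \<ominus> zer C A B = zer C A B"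
  by (metis neg_unique zer_hom add_zero_right)

lemma neg_eq_zeroD: "hom A B g \<Longrightarrow> \<ominus> g = zer C A B \<Longrightarrow> g = zer C A B"
  by (metis homD(1,2) neg_neg neg_zero)

lemma eq_if_diff_zero:
  assumes "hom A B g" "hom A B h" "g \<oplus> \<ominus> h = zer C A B"
  shows "g = h"
proof -
  have "\<ominus> h = \<ominus> g" using neg_unique[OF _ _ assms(3)] assms by auto
  then show ?thesis using neg_neg assms by metis
qed

lemma comp_assoc_zero:
  "hom W A x \<Longrightarrow> hom A B g \<Longrightarrow> hom B D h \<Longrightarrow> h \<cdot> g = zer C A D \<Longrightarrow> h \<cdot> (g \<cdot> x) = zer C W D"
  using comp_assoc[of W A x B g D h] comp_zero_left[of W A x D] homD by simp

lemma comp_assoc_eq: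
  "hom W A x \<Longrightarrow> hom A B g \<Longrightarrow> hom B D h \<Longrightarrow> hom A B' g' \<Longrightarrow> hom B' D h' \<Longrightarrow> h \<cdot> g = h' \<cdot> g'
   \<Longrightarrow> h \<cdot> (g \<cdot> x) = h' \<cdot> (g' \<cdot> x)"
  using comp_assoc[of W A x B g D h] comp_assoc[of W A x B' g' D h'] by simp

section \<open>Biproducts, monomorphisms, epimorphisms and exactness\<close>

lemma biproduct:
  assumes "A \<in> Obj C" "B \<in> Obj C"
  shows "bp C A B \<in> Obj C" "hom A (bp C A B) (in1 C A B)" "hom B (bp C A B) (in2 C A B)"
    "hom (bp C A B) A (pr1 C A B)" "hom (bp C A B) B (pr2 C A B)"
    "pr1 C A B \<cdot> in1 C A B = idm C A" "pr2 C A B \<cdot> in2 C A B = idm C B"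
    "pr1 C A B \<cdot> in2 C A B = zer C B A" "pr2 C A B \<cdot> in1 C A B = zer C A B"
    "in1 C A B \<cdot> pr1 C A B \<oplus> in2 C A B \<cdot> pr2 C A B = idm C (bp C A B)"
  using additive assms unfolding is_additive_def hom_def by auto

lemma bp_expand:
  assumes A: "A \<in> Obj C" and B: "B \<in> Obj C" and u: "hom W (bp C A B) u"
  shows "u = in1 C A B \<cdot> (pr1 C A B \<cdot> u) \<oplus> in2 C A B \<cdot> (pr2 C A B \<cdot> u)"
proof -
  note b = biproduct[OF A B]
  have "u = (in1 C A B \<cdot> pr1 C A B \<oplus> in2 C A B \<cdot> pr2 C A B) \<cdot> u"
    using b u by (simp add: comp_id_left)
  also have "\<dots> = (in1 C A B \<cdot> pr1 C A B) \<cdot> u \<oplus> (in2 C A B \<cdot> pr2 C A B) \<cdot> u"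
    using b u by (intro comp_distrib_right) auto
  also have "\<dots> = in1 C A B \<cdot> (pr1 C A B \<cdot> u) \<oplus> in2 C A B \<cdot> (pr2 C A B \<cdot> u)"
    using b u by (simp add: comp_assoc)
  finally show ?thesis .
qed

lemma bp_ext:
  assumes "A \<in> Obj C" "B \<in> Obj C" "hom W (bp C A B) u" "hom W (bp C A B) v"
    and "pr1 C A B \<cdot> u = pr1 C A B \<cdot> v" "pr2 C A B \<cdot> u = pr2 C A B \<cdot> v"
  shows "u = v"
  using bp_expand[OF assms(1-3)] bp_expand[OF assms(1,2,4)] assms(5,6) by simp

lemma pr_pair:
  assumes A: "A \<in> Obj C" and B: "B \<in> Obj C" and a: "hom W A a" and b: "hom W B b"
  shows "pr1 C A B \<cdot> (in1 C A B \<cdot> a \<oplus> in2 C A B \<cdot> b) = a"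
    "pr2 C A B \<cdot> (in1 C A B \<cdot> a \<oplus> in2 C A B \<cdot> b) = b"
proof -
  note bb = biproduct[OF A B]
  have ab: "hom W (bp C A B) (in1 C A B \<cdot> a)" "hom W (bp C A B) (in2 C A B \<cdot> b)"
    using bb a b by auto
  have "pr1 C A B \<cdot> (in1 C A B \<cdot> a \<oplus> in2 C A B \<cdot> b)
      = (pr1 C A B \<cdot> in1 C A B) \<cdot> a \<oplus> (pr1 C A B \<cdot> in2 C A B) \<cdot> b"
    using comp_distrib_left[OF ab bb(4)] comp_assoc[OF a bb(2) bb(4)] comp_assoc[OF b bb(3) bb(4)]
    by simp
  also have "\<dots> = a" using bb comp_id_left[OF a] comp_zero_left[OF b A] add_zero_right[OF a] by simp
  finally show "pr1 C A B \<cdot> (in1 C A B \<cdot> a \<oplus> in2 C A B \<cdot> b) = a" .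
  have "pr2 C A B \<cdot> (in1 C A B \<cdot> a \<oplus> in2 C A B \<cdot> b)
      = (pr2 C A B \<cdot> in1 C A B) \<cdot> a \<oplus> (pr2 C A B \<cdot> in2 C A B) \<cdot> b"
    using comp_distrib_left[OF ab bb(5)] comp_assoc[OF a bb(2) bb(5)] comp_assoc[OF b bb(3) bb(5)]
    by simp
  also have "\<dots> = b" using bb comp_id_left[OF b] comp_zero_left[OF a B] add_zero_left[OF b] by simp
  finally show "pr2 C A B \<cdot> (in1 C A B \<cdot> a \<oplus> in2 C A B \<cdot> b) = b" .
qed

lemma copair_in:
  assumes A: "A \<in> Obj C" and B: "B \<in> Obj C" and a: "hom A W a" and b: "hom B W b"
  shows "(a \<cdot> pr1 C A B \<oplus> b \<cdot> pr2 C A B) \<cdot> in1 C A B = a"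
    "(a \<cdot> pr1 C A B \<oplus> b \<cdot> pr2 C A B) \<cdot> in2 C A B = b"
proof -
  note bb = biproduct[OF A B]
  have ab: "hom (bp C A B) W (a \<cdot> pr1 C A B)" "hom (bp C A B) W (b \<cdot> pr2 C A B)"
    using bb a b by auto
  have "(a \<cdot> pr1 C A B \<oplus> b \<cdot> pr2 C A B) \<cdot> in1 C A B
      = a \<cdot> (pr1 C A B \<cdot> in1 C A B) \<oplus> b \<cdot> (pr2 C A B \<cdot> in1 C A B)"
    using comp_distrib_right[OF bb(2) ab] comp_assoc[OF bb(2) bb(4) a] comp_assoc[OF bb(2) bb(5) b]
    by simp
  also have "\<dots> = a" using bb comp_id_right[OF a] comp_zero_right[OF b A] add_zero_right[OF a] by simp
  finally show "(a \<cdot> pr1 C A B \<oplus> b \<cdot> pr2 C A B) \<cdot> in1 C A B = a" .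
  have "(a \<cdot> pr1 C A B \<oplus> b \<cdot> pr2 C A B) \<cdot> in2 C A B
      = a \<cdot> (pr1 C A B \<cdot> in2 C A B) \<oplus> b \<cdot> (pr2 C A B \<cdot> in2 C A B)"
    using comp_distrib_right[OF bb(3) ab] comp_assoc[OF bb(3) bb(4) a] comp_assoc[OF bb(3) bb(5) b]
    by simp
  also have "\<dots> = b" using bb comp_id_right[OF b] comp_zero_right[OF a B] add_zero_left[OF b] by simp
  finally show "(a \<cdot> pr1 C A B \<oplus> b \<cdot> pr2 C A B) \<cdot> in2 C A B = b" .
qed

lemma mat2_pr:
  assumes A1: "A1 \<in> Obj C" and A2: "A2 \<in> Obj C" and B1: "B1 \<in> Obj C" and B2: "B2 \<in> Obj C"
    and a: "hom A1 B1 a" and b: "hom A2 B1 b" and c: "hom A1 B2 c" and e: "hom A2 B2 e"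
  shows "pr1 C B1 B2 \<cdot> mat2 C A1 A2 B1 B2 a b c e = a \<cdot> pr1 C A1 A2 \<oplus> b \<cdot> pr2 C A1 A2"
    "pr2 C B1 B2 \<cdot> mat2 C A1 A2 B1 B2 a b c e = c \<cdot> pr1 C A1 A2 \<oplus> e \<cdot> pr2 C A1 A2"
    "hom (bp C A1 A2) (bp C B1 B2) (mat2 C A1 A2 B1 B2 a b c e)"
proof -
  note ba = biproduct[OF A1 A2] and bb = biproduct[OF B1 B2]
  have u: "hom (bp C A1 A2) B1 (a \<cdot> pr1 C A1 A2 \<oplus> b \<cdot> pr2 C A1 A2)"
    and v: "hom (bp C A1 A2) B2 (c \<cdot> pr1 C A1 A2 \<oplus> e \<cdot> pr2 C A1 A2)"
    using ba a b c e by auto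
  have m: "mat2 C A1 A2 B1 B2 a b c e
      = in1 C B1 B2 \<cdot> (a \<cdot> pr1 C A1 A2 \<oplus> b \<cdot> pr2 C A1 A2) \<oplus> in2 C B1 B2 \<cdot> (c \<cdot> pr1 C A1 A2 \<oplus> e \<cdot> pr2 C A1 A2)"
    unfolding mat2_def
    using comp_distrib_left[OF comp_hom[OF ba(4) a] comp_hom[OF ba(5) b] bb(2)]
      comp_distrib_left[OF comp_hom[OF ba(4) c] comp_hom[OF ba(5) e] bb(3)]
    by simp
  show "pr1 C B1 B2 \<cdot> mat2 C A1 A2 B1 B2 a b c e = a \<cdot> pr1 C A1 A2 \<oplus> b \<cdot> pr2 C A1 A2"
    "pr2 C B1 B2 \<cdot> mat2 C A1 A2 B1 B2 a b c e = c \<cdot> pr1 C A1 A2 \<oplus> e \<cdot> pr2 C A1 A2"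
    using pr_pair[OF B1 B2 u v] m by simp_all
  show "hom (bp C A1 A2) (bp C B1 B2) (mat2 C A1 A2 B1 B2 a b c e)"
    using m u v bb by auto
qed

lemma mono_cancel_zero:
  assumes "is_mono C A B h" "hom A B h" "hom W A g" "h \<cdot> g = zer C W B"
  shows "g = zer C W A"
proof -
  have W: "W \<in> Obj C" and A: "A \<in> Obj C" using assms(3) homD by auto
  have "h \<cdot> zer C W A = h \<cdot> g" using comp_zero_right[OF assms(2) W] assms(4) by simp
  then show ?thesis using assms(1,3) zer_hom[OF W A] unfolding is_mono_def hom_def by blast
qed

lemma mono_if_cancel_zero:
  assumes h: "hom A B h" and cancel: "\<And>W g. hom W A g \<Longrightarrow> h \<cdot> g = zer C W B \<Longrightarrow> g = zer C W A"
  shows "is_mono C A B h"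
  unfolding is_mono_def
proof (intro conjI ballI impI)
  show "h \<in> Hom C A B" using h homD by blast
  fix W g g' assume W: "W \<in> Obj C" and g: "g \<in> Hom C W A" and g': "g' \<in> Hom C W A"
    and eq: "h \<cdot> g = h \<cdot> g'"
  have A: "A \<in> Obj C" using h homD by blast
  have gg: "hom W A g" "hom W A g'" using W A g g' homI by auto
  have "h \<cdot> (g \<oplus> \<ominus> g') = h \<cdot> g \<oplus> \<ominus> (h \<cdot> g')"
    using gg h by (simp add: comp_distrib_left comp_neg neg_hom)
  also have "\<dots> = zer C W B" using eq add_neg_right gg h by (metis comp_hom)
  finally have "g \<oplus> \<ominus> g' = zer C W A" using cancel gg by blast
  then show "g = g'" using eq_if_diff_zero gg by blast
qed

lemma epi_if_cancel_zero:
  assumes h: "hom A B h" and cancel: "\<And>W g. hom B W g \<Longrightarrow> g \<cdot> h = zer C A W \<Longrightarrow> g = zer C B W"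
  shows "is_epi C A B h"
  unfolding is_epi_def
proof (intro conjI ballI impI)
  show "h \<in> Hom C A B" using h homD by blast
  fix W g g' assume W: "W \<in> Obj C" and g: "g \<in> Hom C B W" and g': "g' \<in> Hom C B W"
    and eq: "g \<cdot> h = g' \<cdot> h"
  have B: "B \<in> Obj C" using h homD by blast
  have gg: "hom B W g" "hom B W g'" using W B g g' homI by auto
  have "(g \<oplus> \<ominus> g') \<cdot> h = g \<cdot> h \<oplus> \<ominus> (g' \<cdot> h)"
    using gg h by (simp add: comp_distrib_right neg_comp neg_hom)
  also have "\<dots> = zer C A W" using eq add_neg_right gg h by (metis comp_hom)
  finally have "g \<oplus> \<ominus> g' = zer C B W" using cancel gg by blast
  then show "g = g'" using eq_if_diff_zero gg by blast
qed
lemma right_exact_last_zero: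
  assumes "right_exact C m X d" "hom (X m) W g" "g \<cdot> d (m - 1) = zer C (X (m - 1)) W"
  shows "g = zer C (X m) W"
  using assms homD unfolding right_exact_def hom_def by auto

lemma right_exact_factor:
  assumes "right_exact C m X d" "1 \<le> k" "k < m" "hom (X k) W g" "g \<cdot> d (k - 1) = zer C (X (k - 1)) W"
  obtains h where "hom (X (Suc k)) W h" "g = h \<cdot> d k"
proof -
  have W: "W \<in> Obj C" and XSk: "X (Suc k) \<in> Obj C"
    using assms homD unfolding right_exact_def is_complex_def by auto
  have "\<forall>g\<in>Hom C (X k) W. g \<cdot> d (k - 1) = zer C (X (k - 1)) W \<longrightarrow> (\<exists>h\<in>Hom C (X (Suc k)) W. g = h \<cdot> d k)"
    using assms(1-3) W unfolding right_exact_def by blast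
  then obtain h where "h \<in> Hom C (X (Suc k)) W" "g = h \<cdot> d k"
    using assms(4,5) homD(3) by blast
  then show thesis using that homI[OF XSk W] by blast
qed

lemma left_exact_first_zero:
  assumes "left_exact C m X d" "hom W (X 0) g" "d 0 \<cdot> g = zer C W (X 1)"
  shows "g = zer C W (X 0)"
  using assms homD unfolding left_exact_def hom_def by auto

lemma left_exact_factor:
  assumes "left_exact C m X d" "1 \<le> k" "k < m" "hom W (X k) g" "d k \<cdot> g = zer C W (X (Suc k))"
  obtains h where "hom W (X (k - 1)) h" "g = d (k - 1) \<cdot> h"
proof -
  have W: "W \<in> Obj C" and Xk1: "X (k - 1) \<in> Obj C"
    using assms homD unfolding left_exact_def is_complex_def by auto
  have "\<forall>g\<in>Hom C W (X k). d k \<cdot> g = zer C W (X (Suc k)) \<longrightarrow> (\<exists>h\<in>Hom C W (X (k - 1)). g = d (k - 1) \<cdot> h)"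
    using assms(1-3) W unfolding left_exact_def by blast
  then obtain h where "h \<in> Hom C W (X (k - 1))" "g = d (k - 1) \<cdot> h"
    using assms(4,5) homD(3) by blast
  then show thesis using that homI[OF W Xk1] by blast
qed

end

lemma n_exact_if_mono_right_exact:
  assumes "n_abelian C n" "is_mono C (X 0) (X 1) (d 0)" "right_n_exact C n X d"
  shows "n_exact C n X d"
proof -
  have objs: "X 0 \<in> Obj C" "X 1 \<in> Obj C"
    using assms(3) unfolding right_n_exact_def right_exact_def is_complex_def by auto
  have "\<And>A B f Z e. A \<in> Obj C \<Longrightarrow> B \<in> Obj C \<Longrightarrow> is_mono C A B f \<Longrightarrow>
      is_n_cokernel C n A B f Z e \<Longrightarrow> n_exact C n Z e"
    using assms(1) unfolding n_abelian_def by blast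
  moreover have "is_n_cokernel C n (X 0) (X 1) (d 0) X d"
    using assms(3) by (simp add: is_n_cokernel_def)
  ultimately show ?thesis using objs assms(2) by blast
qed

lemma n_exact_if_epi_left_exact:
  assumes "n_abelian C n" "is_epi C (X n) (X (Suc n)) (d n)" "left_n_exact C n X d"
  shows "n_exact C n X d"
proof -
  have objs: "X n \<in> Obj C" "X (Suc n) \<in> Obj C"
    using assms(3) unfolding left_n_exact_def left_exact_def is_complex_def by auto
  have "\<And>A B f Z e. A \<in> Obj C \<Longrightarrow> B \<in> Obj C \<Longrightarrow> is_epi C A B f \<Longrightarrow>
      is_n_kernel C n A B f Z e \<Longrightarrow> n_exact C n Z e"
    using assms(1) unfolding n_abelian_def by blast
  moreover have "is_n_kernel C n (X n) (X (Suc n)) (d n) X d"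
    using assms(3) by (simp add: is_n_kernel_def)
  ultimately show ?thesis using objs assms(2) by blast
qed

section \<open>The mapping cone\<close>

locale mapping_cone = additive_category C for C :: "('o, 'm, 'x) addcat_scheme" +
  fixes n :: nat and X Y :: "nat \<Rightarrow> 'o" and dX dY f :: "nat \<Rightarrow> 'm"
  assumes n_pos: "1 \<le> n"
    and X_complex: "is_complex C (Suc n) X dX"
    and Y_complex: "is_complex C n Y dY"
    and f_morphism: "is_complex_morphism C n X dX Y dY f"
begin

abbreviation "K \<equiv> cone_obj C n X Y"
abbreviation "D \<equiv> cone_diff C n X dX Y dY f"
abbreviation "i1 k \<equiv> in1 C (X k) (Y (k - 1))"
abbreviation "i2 k \<equiv> in2 C (X k) (Y (k - 1))"
abbreviation "p1 k \<equiv> pr1 C (X k) (Y (k - 1))"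
abbreviation "p2 k \<equiv> pr2 C (X k) (Y (k - 1))"

lemma X_obj: "k \<le> Suc n \<Longrightarrow> X k \<in> Obj C"
  using X_complex unfolding is_complex_def by auto

lemma Y_obj: "k \<le> n \<Longrightarrow> Y k \<in> Obj C"
  using Y_complex unfolding is_complex_def by auto

lemma dX_hom: "k \<le> n \<Longrightarrow> hom (X k) (X (Suc k)) (dX k)"
  using X_complex X_obj unfolding is_complex_def hom_def by auto

lemma dY_hom: "k < n \<Longrightarrow> hom (Y k) (Y (Suc k)) (dY k)"
  using Y_complex Y_obj unfolding is_complex_def hom_def by auto

lemma dX_dX: "Suc k \<le> n \<Longrightarrow> dX (Suc k) \<cdot> dX k = zer C (X k) (X (Suc (Suc k)))"
  using X_complex unfolding is_complex_def by auto

lemma dY_dY: "Suc k < n \<Longrightarrow> dY (Suc k) \<cdot> dY k = zer C (Y k) (Y (Suc (Suc k)))"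
  using Y_complex unfolding is_complex_def by auto

lemma f_hom: "k \<le> n \<Longrightarrow> hom (X k) (Y k) (f k)"
  using f_morphism X_obj Y_obj unfolding is_complex_morphism_def hom_def by auto

lemma f_comm: "k < n \<Longrightarrow> f (Suc k) \<cdot> dX k = dY k \<cdot> f k"
  using f_morphism unfolding is_complex_morphism_def by auto

lemma K_0: "K 0 = X 0"
  by (simp add: cone_obj_def)

lemma K_mid: "1 \<le> k \<Longrightarrow> k \<le> n \<Longrightarrow> K k = bp C (X k) (Y (k - 1))"
  by (simp add: cone_obj_def)

lemma K_last: "K (Suc n) = Y n"
  by (simp add: cone_obj_def)

lemma K_bp:
  assumes "1 \<le> k" "k \<le> n"
  shows "K k \<in> Obj C" "hom (X k) (K k) (i1 k)" "hom (Y (k - 1)) (K k) (i2 k)"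
    "hom (K k) (X k) (p1 k)" "hom (K k) (Y (k - 1)) (p2 k)"
  using biproduct[OF X_obj Y_obj, of k "k - 1"] K_mid[OF assms] assms by auto

lemma K_obj: "k \<le> Suc n \<Longrightarrow> K k \<in> Obj C"
  using K_bp(1)[of k] K_0 K_last X_obj Y_obj by (cases "k = 0"; cases "k = Suc n") auto

lemma K_pair:
  assumes k: "1 \<le> k" "k \<le> n" and a: "hom W (X k) a" and b: "hom W (Y (k - 1)) b"
  shows "hom W (K k) (i1 k \<cdot> a \<oplus> i2 k \<cdot> b)" "p1 k \<cdot> (i1 k \<cdot> a \<oplus> i2 k \<cdot> b) = a"
    "p2 k \<cdot> (i1 k \<cdot> a \<oplus> i2 k \<cdot> b) = b"
  using K_bp[OF k] a b pr_pair[OF X_obj Y_obj a b] k by auto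

lemma K_ext:
  assumes k: "1 \<le> k" "k \<le> n" and "hom W (K k) u" "hom W (K k) v"
    and "p1 k \<cdot> u = p1 k \<cdot> v" "p2 k \<cdot> u = p2 k \<cdot> v"
  shows "u = v"
  using bp_ext[OF X_obj Y_obj, of k "k - 1" W u v] assms K_mid[OF k] by auto

lemma K_zero:
  assumes k: "1 \<le> k" "k \<le> n" and u: "hom W (K k) u"
    and "p1 k \<cdot> u = zer C W (X k)" "p2 k \<cdot> u = zer C W (Y (k - 1))"
  shows "u = zer C W (K k)"
proof (rule K_ext[OF k u])
  have W: "W \<in> Obj C" using u homD by blast
  show "hom W (K k) (zer C W (K k))" using W K_bp(1)[OF k] by blast
  show "p1 k \<cdot> u = p1 k \<cdot> zer C W (K k)" "p2 k \<cdot> u = p2 k \<cdot> zer C W (K k)"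
    using assms comp_zero_right[OF K_bp(4)[OF k] W] comp_zero_right[OF K_bp(5)[OF k] W] by simp_all
qed

lemma D_0: "D 0 = i1 1 \<cdot> (\<ominus> dX 0) \<oplus> i2 1 \<cdot> f 0"
  by (simp add: cone_diff_def)

lemma D_mid: "1 \<le> k \<Longrightarrow> k < n \<Longrightarrow> D k = mat2 C (X k) (Y (k - 1)) (X (Suc k)) (Y k)
    (\<ominus> dX k) (zer C (Y (k - 1)) (X (Suc k))) (f k) (dY (k - 1))"
  by (simp add: cone_diff_def)

lemma D_last: "D n = f n \<cdot> p1 n \<oplus> dY (n - 1) \<cdot> p2 n"
  using n_pos by (simp add: cone_diff_def)

lemma pr_D0: "p1 1 \<cdot> D 0 = \<ominus> dX 0" "p2 1 \<cdot> D 0 = f 0"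
proof -
  have h: "X 1 \<in> Obj C" "Y 0 \<in> Obj C" "hom (X 0) (X 1) (\<ominus> dX 0)" "hom (X 0) (Y 0) (f 0)"
    using X_obj Y_obj neg_hom[OF dX_hom[of 0]] f_hom[of 0] n_pos by auto
  show "p1 1 \<cdot> D 0 = \<ominus> dX 0" "p2 1 \<cdot> D 0 = f 0"
    using pr_pair[OF h] D_0 by auto
qed

lemma D0_hom: "hom (K 0) (K 1) (D 0)"
  using D_0 K_0 K_mid[of 1] n_pos biproduct[OF X_obj Y_obj, of 1 0] neg_hom[OF dX_hom, of 0] f_hom[of 0]
  by auto

lemma pr_D_mid:
  assumes "1 \<le> k" "k < n"
  shows "p1 (Suc k) \<cdot> D k = (\<ominus> dX k) \<cdot> p1 k"
    "p2 (Suc k) \<cdot> D k = f k \<cdot> p1 k \<oplus> dY (k - 1) \<cdot> p2 k"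
    "hom (K k) (K (Suc k)) (D k)"
proof -
  have o: "X k \<in> Obj C" "Y (k - 1) \<in> Obj C" "X (Suc k) \<in> Obj C" "Y k \<in> Obj C"
    using assms X_obj Y_obj by auto
  have h: "hom (X k) (X (Suc k)) (\<ominus> dX k)" "hom (X k) (Y k) (f k)" "hom (Y (k - 1)) (Y k) (dY (k - 1))"
    using neg_hom[OF dX_hom[of k]] f_hom[of k] dY_hom[of "k - 1"] assms by auto
  note m = mat2_pr[OF o h(1) zer_hom[OF o(2) o(3)] h(2,3)]
  have "zer C (Y (k - 1)) (X (Suc k)) \<cdot> p2 k = zer C (K k) (X (Suc k))"
    using comp_zero_left[OF K_bp(5)[OF assms(1)] o(3)] assms by auto
  then show "p1 (Suc k) \<cdot> D k = (\<ominus> dX k) \<cdot> p1 k"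
    using m(1) D_mid[OF assms] assms add_zero_right comp_hom[OF K_bp(4)[OF assms(1)] h(1)] K_mid by auto
  show "p2 (Suc k) \<cdot> D k = f k \<cdot> p1 k \<oplus> dY (k - 1) \<cdot> p2 k"
    using m(2) D_mid[OF assms] assms by auto
  show "hom (K k) (K (Suc k)) (D k)"
    using m(3) D_mid[OF assms] assms K_mid by auto
qed

lemma D_last_in: "D n \<cdot> i1 n = f n" "D n \<cdot> i2 n = dY (n - 1)" "hom (K n) (K (Suc n)) (D n)"
proof -
  have h: "hom (X n) (Y n) (f n)" "hom (Y (n - 1)) (Y n) (dY (n - 1))"
    using f_hom dY_hom[of "n - 1"] n_pos by auto
  show "D n \<cdot> i1 n = f n" "D n \<cdot> i2 n = dY (n - 1)"
    using copair_in[OF X_obj Y_obj h] D_last by auto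
  show "hom (K n) (K (Suc n)) (D n)"
    using D_last h K_bp[OF n_pos order.refl] K_last by auto
qed

lemma D_hom: "k \<le> n \<Longrightarrow> hom (K k) (K (Suc k)) (D k)"
  using D0_hom pr_D_mid(3) D_last_in(3) by (metis One_nat_def Suc_leI le_neq_implies_less not_gr_zero)

lemma D0_comp:
  assumes x: "hom W (X 0) x"
  shows "p1 1 \<cdot> (D 0 \<cdot> x) = \<ominus> (dX 0 \<cdot> x)" "p2 1 \<cdot> (D 0 \<cdot> x) = f 0 \<cdot> x"
proof -
  have x': "hom W (K 0) x" using x K_0 by simp
  have p: "hom (K 1) (X 1) (p1 1)" "hom (K 1) (Y 0) (p2 1)" using K_bp[of 1] n_pos by auto
  show "p1 1 \<cdot> (D 0 \<cdot> x) = \<ominus> (dX 0 \<cdot> x)"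
    using comp_assoc[OF x' D0_hom p(1)] pr_D0(1) neg_comp[OF x dX_hom[of 0]] by simp
  show "p2 1 \<cdot> (D 0 \<cdot> x) = f 0 \<cdot> x"
    using comp_assoc[OF x' D0_hom p(2)] pr_D0(2) by simp
qed

lemma D_mid_comp:
  assumes k: "1 \<le> k" "k < n" and g: "hom W (K k) g"
  shows "p1 (Suc k) \<cdot> (D k \<cdot> g) = \<ominus> (dX k \<cdot> (p1 k \<cdot> g))"
    "p2 (Suc k) \<cdot> (D k \<cdot> g) = f k \<cdot> (p1 k \<cdot> g) \<oplus> dY (k - 1) \<cdot> (p2 k \<cdot> g)"
proof -
  have p': "hom (K (Suc k)) (X (Suc k)) (p1 (Suc k))" "hom (K (Suc k)) (Y k) (p2 (Suc k))"
    using K_bp[of "Suc k"] k by auto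
  have p: "hom (K k) (X k) (p1 k)" "hom (K k) (Y (k - 1)) (p2 k)" using K_bp[of k] k by auto
  have d: "hom (X k) (X (Suc k)) (dX k)" "hom (X k) (Y k) (f k)" "hom (Y (k - 1)) (Y k) (dY (k - 1))"
    using dX_hom[of k] f_hom[of k] dY_hom[of "k - 1"] k by auto
  note Dk = pr_D_mid[OF k]
  have "p1 (Suc k) \<cdot> (D k \<cdot> g) = ((\<ominus> dX k) \<cdot> p1 k) \<cdot> g"
    using comp_assoc[OF g Dk(3) p'(1)] Dk(1) by simp
  also have "\<dots> = \<ominus> (dX k \<cdot> (p1 k \<cdot> g))"
    using comp_assoc[OF g p(1) neg_hom[OF d(1)]] neg_comp[OF comp_hom[OF g p(1)] d(1)] by simp
  finally show "p1 (Suc k) \<cdot> (D k \<cdot> g) = \<ominus> (dX k \<cdot> (p1 k \<cdot> g))" .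
  have "p2 (Suc k) \<cdot> (D k \<cdot> g) = (f k \<cdot> p1 k \<oplus> dY (k - 1) \<cdot> p2 k) \<cdot> g"
    using comp_assoc[OF g Dk(3) p'(2)] Dk(2) by simp
  also have "\<dots> = f k \<cdot> (p1 k \<cdot> g) \<oplus> dY (k - 1) \<cdot> (p2 k \<cdot> g)"
    using comp_distrib_right[OF g comp_hom[OF p(1) d(2)] comp_hom[OF p(2) d(3)]]
      comp_assoc[OF g p(1) d(2)] comp_assoc[OF g p(2) d(3)] by simp
  finally show "p2 (Suc k) \<cdot> (D k \<cdot> g) = f k \<cdot> (p1 k \<cdot> g) \<oplus> dY (k - 1) \<cdot> (p2 k \<cdot> g)" .
qed

lemma D_last_comp:
  assumes g: "hom W (K n) g"
  shows "D n \<cdot> g = f n \<cdot> (p1 n \<cdot> g) \<oplus> dY (n - 1) \<cdot> (p2 n \<cdot> g)"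
proof -
  have p: "hom (K n) (X n) (p1 n)" "hom (K n) (Y (n - 1)) (p2 n)" using K_bp[of n] n_pos by auto
  have d: "hom (X n) (Y n) (f n)" "hom (Y (n - 1)) (Y n) (dY (n - 1))"
    using f_hom[of n] dY_hom[of "n - 1"] n_pos by auto
  show ?thesis
    using D_last comp_distrib_right[OF g comp_hom[OF p(1) d(1)] comp_hom[OF p(2) d(2)]]
      comp_assoc[OF g p(1) d(1)] comp_assoc[OF g p(2) d(2)] by simp
qed

lemma dX_pr1_D_zero:
  assumes k: "k < n" and g: "hom W (K k) g"
  shows "dX (Suc k) \<cdot> (p1 (Suc k) \<cdot> (D k \<cdot> g)) = zer C W (X (Suc (Suc k)))"
proof -
  obtain x where x: "hom W (X k) x" and px: "p1 (Suc k) \<cdot> (D k \<cdot> g) = \<ominus> (dX k \<cdot> x)"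
  proof (cases "k = 0")
    case True
    then show ?thesis using that[of g] D0_comp(1)[of W g] g K_0 by simp
  next
    case False
    then show ?thesis using that[OF comp_hom[OF g K_bp(4)]] D_mid_comp(1)[OF _ k g] k by simp
  qed
  have W: "W \<in> Obj C" using g homD by blast
  have dd: "hom (X k) (X (Suc k)) (dX k)" "hom (X (Suc k)) (X (Suc (Suc k))) (dX (Suc k))"
    using dX_hom k by auto
  have "dX (Suc k) \<cdot> (\<ominus> (dX k \<cdot> x)) = \<ominus> (dX (Suc k) \<cdot> (dX k \<cdot> x))"
    using comp_neg[OF comp_hom[OF x dd(1)] dd(2)] .
  also have "\<dots> = zer C W (X (Suc (Suc k)))"
    using comp_assoc_zero[OF x dd dX_dX] neg_zero[OF W X_obj] k by simp
  finally show ?thesis using px by simp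
qed

lemma D_Y_part_zero:
  assumes k: "k < n" and g: "hom W (K k) g"
  shows "f (Suc k) \<cdot> (p1 (Suc k) \<cdot> (D k \<cdot> g)) \<oplus> dY k \<cdot> (p2 (Suc k) \<cdot> (D k \<cdot> g)) = zer C W (Y (Suc k))"
proof -
  have hfS: "hom (X (Suc k)) (Y (Suc k)) (f (Suc k))" and hdX: "hom (X k) (X (Suc k)) (dX k)"
    and hf: "hom (X k) (Y k) (f k)" and hdY: "hom (Y k) (Y (Suc k)) (dY k)"
    using f_hom dX_hom dY_hom k by auto
  show ?thesis
  proof (cases "k = 0")
    case True
    have x: "hom W (X k) g" using g True K_0 by simp
    have comm: "f (Suc k) \<cdot> (dX k \<cdot> g) = dY k \<cdot> (f k \<cdot> g)"
      using comp_assoc_eq[OF x hdX hfS hf hdY] f_comm k by simp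
    show ?thesis
      using True D0_comp[OF x[unfolded True]] comp_neg[OF comp_hom[OF x hdX] hfS] comm
        add_neg_left[OF comp_hom[OF comp_hom[OF x hf] hdY]] by simp
  next
    case False
    then have k1: "1 \<le> k" by simp
    define a b where "a = p1 k \<cdot> g" and "b = p2 k \<cdot> g"
    have a: "hom W (X k) a" and b: "hom W (Y (k - 1)) b"
      using comp_hom[OF g K_bp(4)[OF k1]] comp_hom[OF g K_bp(5)[OF k1]] k a_def b_def by auto
    have hdY': "hom (Y (k - 1)) (Y k) (dY (k - 1))" using dY_hom[of "k - 1"] k1 k by simp
    have comm: "f (Suc k) \<cdot> (dX k \<cdot> a) = dY k \<cdot> (f k \<cdot> a)"
      using comp_assoc_eq[OF a hdX hfS hf hdY] f_comm k by simp
    have dYdY: "dY k \<cdot> (dY (k - 1) \<cdot> b) = zer C W (Y (Suc k))"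
      using comp_assoc_zero[OF b hdY' hdY] dY_dY[of "k - 1"] k k1 by simp
    have "f (Suc k) \<cdot> (p1 (Suc k) \<cdot> (D k \<cdot> g)) \<oplus> dY k \<cdot> (p2 (Suc k) \<cdot> (D k \<cdot> g))
        = f (Suc k) \<cdot> (\<ominus> (dX k \<cdot> a)) \<oplus> dY k \<cdot> (f k \<cdot> a \<oplus> dY (k - 1) \<cdot> b)"
      using D_mid_comp[OF k1 k g] a_def b_def by simp
    also have "\<dots> = \<ominus> (dY k \<cdot> (f k \<cdot> a)) \<oplus> (dY k \<cdot> (f k \<cdot> a) \<oplus> zer C W (Y (Suc k)))"
      using comp_neg[OF comp_hom[OF a hdX] hfS] comm
        comp_distrib_left[OF comp_hom[OF a hf] comp_hom[OF b hdY'] hdY] dYdY by simp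
    also have "\<dots> = zer C W (Y (Suc k))"
      using comp_hom[OF comp_hom[OF a hf] hdY] by (simp add: add_zero_right add_neg_left)
    finally show ?thesis .
  qed
qed

lemma D_D_zero:
  assumes k: "k < n" and g: "hom W (K k) g"
  shows "D (Suc k) \<cdot> (D k \<cdot> g) = zer C W (K (Suc (Suc k)))"
proof -
  have dg: "hom W (K (Suc k)) (D k \<cdot> g)" using comp_hom[OF g D_hom] k by simp
  note Y_part = D_Y_part_zero[OF k g]
  show ?thesis
  proof (cases "Suc k = n")
    case True
    then show ?thesis using D_last_comp[of W "D k \<cdot> g"] dg Y_part K_last by auto
  next
    case False
    then have k2: "1 \<le> Suc k" "Suc k < n" using k by auto
    have W: "W \<in> Obj C" using g homD by blast
    have "p1 (Suc (Suc k)) \<cdot> (D (Suc k) \<cdot> (D k \<cdot> g)) = zer C W (X (Suc (Suc k)))"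
      using D_mid_comp(1)[OF k2 dg] dX_pr1_D_zero[OF k g] neg_zero[OF W X_obj] k2 by simp
    moreover have "p2 (Suc (Suc k)) \<cdot> (D (Suc k) \<cdot> (D k \<cdot> g)) = zer C W (Y (Suc (Suc k) - 1))"
      using D_mid_comp(2)[OF k2 dg] Y_part by simp
    ultimately show ?thesis using K_zero[of "Suc (Suc k)" W] comp_hom[OF dg D_hom] k2 by simp
  qed
qed

lemma cone_complex: "is_complex C (Suc n) K D"
  unfolding is_complex_def
proof (intro conjI allI impI)
  fix k assume "k \<le> Suc n"
  then show "K k \<in> Obj C" by (rule K_obj)
next
  fix k assume "k < Suc n"
  then show "D k \<in> Hom C (K k) (K (Suc k))" using D_hom homD by auto
next
  fix k assume k: "Suc k < Suc n"
  have i: "hom (K k) (K k) (idm C (K k))" using K_obj[of k] k by auto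
  show "D (Suc k) \<cdot> D k = zer C (K k) (K (Suc (Suc k)))"
    using D_D_zero[OF _ i] comp_id_right D_hom[of k] k by simp
qed

section \<open>Left exactness of the mapping cone\<close>

abbreviation "Y_ext \<equiv> Y(Suc n := X (Suc n))"
abbreviation "dY_ext e \<equiv> dY(n := e)"

lemma D0_mono:
  assumes X_left: "left_exact C (Suc n) X dX"
  shows "is_mono C (K 0) (K 1) (D 0)"
proof (rule mono_if_cancel_zero[OF D0_hom])
  fix W g assume g: "hom W (K 0) g" and z: "D 0 \<cdot> g = zer C W (K 1)"
  have W: "W \<in> Obj C" and x: "hom W (X 0) g" using g homD K_0 by auto
  have p: "hom (K 1) (X 1) (p1 1)" and d: "hom (X 0) (X 1) (dX 0)" using K_bp(4)[of 1] dX_hom[of 0] n_pos by auto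
  have "\<ominus> (dX 0 \<cdot> g) = zer C W (X 1)"
    using D0_comp(1)[OF x] z comp_zero_right[OF p W] by simp
  then have "dX 0 \<cdot> g = zer C W (X 1)" using neg_eq_zeroD[OF comp_hom[OF x d]] by blast
  then show "g = zer C W (K 0)" using left_exact_first_zero[OF X_left x] K_0 by simp
qed

lemma cone_cycle_Y_component:
  assumes k: "1 \<le> k" "k \<le> n" and g: "hom W (K k) g" and cycle: "D k \<cdot> g = zer C W (K (Suc k))"
  shows "f k \<cdot> (p1 k \<cdot> g) \<oplus> dY (k - 1) \<cdot> (p2 k \<cdot> g) = zer C W (Y k)"
proof (cases "k < n")
  case True
  have W: "W \<in> Obj C" using g homD by blast
  show ?thesis
    using D_mid_comp(2)[OF k(1) True g] cycle comp_zero_right[OF K_bp(5)[of "Suc k"] W] True by simp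
next
  case False
  then have "k = n" using k by simp
  then show ?thesis using D_last_comp[of W g] g cycle K_last by simp
qed

text \<open>At \<open>k = n\<close> the cycle condition only constrains the \<open>Y\<close>-component; the
\<open>X\<close>-component equation is recovered by applying \<open>e\<close>.\<close>

lemma cone_cycle_X_component:
  assumes k: "1 \<le> k" "k \<le> n" and g: "hom W (K k) g" and cycle: "D k \<cdot> g = zer C W (K (Suc k))"
    and e: "hom (Y n) (X (Suc n)) e" "e \<cdot> f n = dX n" "e \<cdot> dY (n - 1) = zer C (Y (n - 1)) (X (Suc n))"
  shows "dX k \<cdot> (p1 k \<cdot> g) = zer C W (X (Suc k))"
proof -
  have W: "W \<in> Obj C" using g homD by blast
  have a: "hom W (X k) (p1 k \<cdot> g)" and b: "hom W (Y (k - 1)) (p2 k \<cdot> g)"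
    using comp_hom[OF g K_bp(4)[OF k]] comp_hom[OF g K_bp(5)[OF k]] by auto
  have hdX: "hom (X k) (X (Suc k)) (dX k)" and hf: "hom (X k) (Y k) (f k)"
    and hdY: "hom (Y (k - 1)) (Y k) (dY (k - 1))"
    using dX_hom f_hom dY_hom[of "k - 1"] k by auto
  show ?thesis
  proof (cases "k < n")
    case True
    have "\<ominus> (dX k \<cdot> (p1 k \<cdot> g)) = zer C W (X (Suc k))"
      using D_mid_comp(1)[OF k(1) True g] cycle comp_zero_right[OF K_bp(4)[of "Suc k"] W] True by simp
    then show ?thesis using neg_eq_zeroD[OF comp_hom[OF a hdX]] by simp
  next
    case False
    then have kn: "k = n" using k by simp
    have he: "hom (Y k) (X (Suc k)) e" and XS: "X (Suc k) \<in> Obj C" using e kn X_obj by simp_all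
    have ek: "e \<cdot> f k = dX k" "e \<cdot> dY (k - 1) = zer C (Y (k - 1)) (X (Suc k))"
      using e kn by simp_all
    have "zer C W (X (Suc k)) = e \<cdot> (f k \<cdot> (p1 k \<cdot> g) \<oplus> dY (k - 1) \<cdot> (p2 k \<cdot> g))"
      using cone_cycle_Y_component[OF k g cycle] comp_zero_right[OF he W] by simp
    also have "\<dots> = (e \<cdot> f k) \<cdot> (p1 k \<cdot> g) \<oplus> (e \<cdot> dY (k - 1)) \<cdot> (p2 k \<cdot> g)"
      using comp_distrib_left[OF comp_hom[OF a hf] comp_hom[OF b hdY] he]
        comp_assoc[OF a hf he] comp_assoc[OF b hdY he] by simp
    also have "\<dots> = dX k \<cdot> (p1 k \<cdot> g)"
      unfolding ek comp_zero_left[OF b XS] using add_zero_right[OF comp_hom[OF a hdX]] .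
    finally show ?thesis by simp
  qed
qed

lemma cone_cycle_Y_cycle:
  assumes k: "1 \<le> k" "k \<le> n" and g: "hom W (K k) g"
    and Y_part: "f k \<cdot> (p1 k \<cdot> g) \<oplus> dY (k - 1) \<cdot> (p2 k \<cdot> g) = zer C W (Y k)"
    and a: "hom W (X (k - 1)) a" "p1 k \<cdot> g = dX (k - 1) \<cdot> a"
  shows "dY (k - 1) \<cdot> (p2 k \<cdot> g \<oplus> f (k - 1) \<cdot> a) = zer C W (Y k)"
proof -
  have b: "hom W (Y (k - 1)) (p2 k \<cdot> g)" using comp_hom[OF g K_bp(5)[OF k]] .
  have hdX: "hom (X (k - 1)) (X k) (dX (k - 1))" and hf: "hom (X (k - 1)) (Y (k - 1)) (f (k - 1))"
    and hf': "hom (X k) (Y k) (f k)" and hdY: "hom (Y (k - 1)) (Y k) (dY (k - 1))"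
    using dX_hom[of "k - 1"] f_hom[of "k - 1"] f_hom[of k] dY_hom[of "k - 1"] k by auto
  have "dY (k - 1) \<cdot> (f (k - 1) \<cdot> a) = f k \<cdot> (p1 k \<cdot> g)"
    using comp_assoc_eq[OF a(1) hdX hf' hf hdY] f_comm[of "k - 1"] k a(2) by simp
  then show ?thesis
    using comp_distrib_left[OF b comp_hom[OF a(1) hf] hdY] Y_part
      add_comm[OF comp_hom[OF b hdY] comp_hom[OF comp_hom[OF a(1) hdX] hf']] a(2) by simp
qed

lemma cone_cycle_lift_first:
  assumes mono: "is_mono C (Y 0) (Y 1) (dY 0)" and g: "hom W (K 1) g"
    and a: "hom W (X 0) a" "p1 1 \<cdot> g = dX 0 \<cdot> a"
    and c: "dY 0 \<cdot> (p2 1 \<cdot> g \<oplus> f 0 \<cdot> a) = zer C W (Y 1)"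
  shows "g = D 0 \<cdot> (\<ominus> a)"
proof (rule K_ext[of 1 W, OF _ n_pos g])
  have b: "hom W (Y 0) (p2 1 \<cdot> g)" using comp_hom[OF g K_bp(5)[of 1]] n_pos by simp
  have fa: "hom W (Y 0) (f 0 \<cdot> a)" using comp_hom[OF a(1) f_hom] by simp
  have hdY: "hom (Y 0) (Y 1) (dY 0)" using dY_hom[of 0] n_pos by simp
  have "p2 1 \<cdot> g \<oplus> f 0 \<cdot> a = zer C W (Y 0)"
    using mono_cancel_zero[OF mono hdY add_hom[OF b fa] c] .
  then have "p2 1 \<cdot> g = \<ominus> (f 0 \<cdot> a)" using add_eq_zero_imp_neg[OF fa b] by simp
  then show "p2 1 \<cdot> g = p2 1 \<cdot> (D 0 \<cdot> (\<ominus> a))"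
    using D0_comp(2)[OF neg_hom[OF a(1)]] comp_neg[OF a(1) f_hom] by simp
  show "p1 1 \<cdot> g = p1 1 \<cdot> (D 0 \<cdot> (\<ominus> a))"
    using D0_comp(1)[OF neg_hom[OF a(1)]] comp_neg[OF a(1) dX_hom] neg_neg[OF comp_hom[OF a(1) dX_hom]] a(2)
    by simp
  show "hom W (K 1) (D 0 \<cdot> (\<ominus> a))" using comp_hom[OF neg_hom[OF a(1), folded K_0] D0_hom] .
qed simp

lemma cone_cycle_lift:
  assumes k: "2 \<le> k" "k \<le> n" and g: "hom W (K k) g"
    and a: "hom W (X (k - 1)) a" "p1 k \<cdot> g = dX (k - 1) \<cdot> a"
    and b: "hom W (Y (k - 2)) b" "p2 k \<cdot> g \<oplus> f (k - 1) \<cdot> a = dY (k - 2) \<cdot> b"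
  shows "g = D (k - 1) \<cdot> (i1 (k - 1) \<cdot> (\<ominus> a) \<oplus> i2 (k - 1) \<cdot> b)"
proof -
  have k': "1 \<le> k - 1" "k - 1 < n" and k1: "1 \<le> k" and sk: "Suc (k - 1) = k" "k - 1 - 1 = k - 2"
    using k by auto
  note h = K_pair[OF k'(1) less_imp_le[OF k'(2)] neg_hom[OF a(1)] b(1)[folded sk(2)]]
  define x where "x = i1 (k - 1) \<cdot> (\<ominus> a) \<oplus> i2 (k - 1) \<cdot> b"
  have x: "hom W (K (k - 1)) x" using h x_def sk by simp
  have hf: "hom (X (k - 1)) (Y (k - 1)) (f (k - 1))" and hd: "hom (X (k - 1)) (X k) (dX (k - 1))"
    using f_hom[of "k - 1"] dX_hom[of "k - 1"] k sk by auto
  have "g = D (k - 1) \<cdot> x"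
  proof (rule K_ext[OF k1 k(2) g])
    show "hom W (K k) (D (k - 1) \<cdot> x)" using comp_hom[OF x D_hom[of "k - 1"]] sk k by simp
    show "p1 k \<cdot> g = p1 k \<cdot> (D (k - 1) \<cdot> x)"
      using D_mid_comp(1)[OF k' x] h x_def sk a(2) comp_neg[OF a(1) hd] neg_neg[OF comp_hom[OF a(1) hd]]
      by simp
    have "p2 k \<cdot> (D (k - 1) \<cdot> x) = f (k - 1) \<cdot> (\<ominus> a) \<oplus> (p2 k \<cdot> g \<oplus> f (k - 1) \<cdot> a)"
      using D_mid_comp(2)[OF k' x] h x_def sk b(2) by simp
    also have "\<dots> = p2 k \<cdot> g"
      using comp_neg[OF a(1) hf] neg_add_cancel_left[OF comp_hom[OF a(1) hf]] comp_hom[OF g K_bp(5)[OF k1 k(2)]]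
      by simp
    finally show "p2 k \<cdot> g = p2 k \<cdot> (D (k - 1) \<cdot> x)" by simp
  qed
  then show ?thesis using x_def by simp
qed

lemma Y_ext_comp_zero:
  assumes "is_complex C (Suc n) Y_ext (dY_ext e)"
  shows "e \<cdot> dY (n - 1) = zer C (Y (n - 1)) (X (Suc n))"
proof -
  have "Suc (n - 1) < Suc n" using n_pos by simp
  then have "dY_ext e (Suc (n - 1)) \<cdot> dY_ext e (n - 1) = zer C (Y_ext (n - 1)) (Y_ext (Suc (Suc (n - 1))))"
    using assms unfolding is_complex_def by blast
  moreover have "Suc (n - 1) = n" "n - 1 \<noteq> n" "n - 1 \<noteq> Suc n" using n_pos by auto
  ultimately show ?thesis by simp
qed

lemma Y_ext_left_factor:
  assumes Y_left: "left_exact C (Suc n) Y_ext (dY_ext e)"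
    and j: "1 \<le> j" "j < n" and c: "hom W (Y j) c" "dY j \<cdot> c = zer C W (Y (Suc j))"
  obtains b where "hom W (Y (j - 1)) b" "c = dY (j - 1) \<cdot> b"
proof -
  have "hom W (Y_ext j) c" "dY_ext e j \<cdot> c = zer C W (Y_ext (Suc j))" "j < Suc n"
    using c j by simp_all
  then obtain b where "hom W (Y_ext (j - 1)) b" "c = dY_ext e (j - 1) \<cdot> b"
    using left_exact_factor[OF Y_left j(1)] by blast
  moreover have "j - 1 \<noteq> n" "j - 1 \<noteq> Suc n" using j by auto
  ultimately show thesis using that by simp
qed

lemma cone_cycle_is_boundary:
  assumes X_left: "left_exact C (Suc n) X dX"
    and mono: "is_mono C (Y 0) (Y 1) (dY 0)"
    and Y_left: "left_exact C (Suc n) Y_ext (dY_ext e)"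
    and e: "hom (Y n) (X (Suc n)) e" "e \<cdot> f n = dX n"
    and k: "1 \<le> k" "k \<le> n" and g: "hom W (K k) g" and cycle: "D k \<cdot> g = zer C W (K (Suc k))"
  obtains h where "hom W (K (k - 1)) h" "g = D (k - 1) \<cdot> h"
proof -
  have ed: "e \<cdot> dY (n - 1) = zer C (Y (n - 1)) (X (Suc n))"
    using Y_ext_comp_zero Y_left unfolding left_exact_def by blast
  obtain a where a: "hom W (X (k - 1)) a" "p1 k \<cdot> g = dX (k - 1) \<cdot> a"
    using left_exact_factor[OF X_left k(1) _ comp_hom[OF g K_bp(4)[OF k]]
        cone_cycle_X_component[OF k g cycle e ed]] k(2) by auto
  have c: "dY (k - 1) \<cdot> (p2 k \<cdot> g \<oplus> f (k - 1) \<cdot> a) = zer C W (Y k)"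
    using cone_cycle_Y_cycle[OF k g cone_cycle_Y_component[OF k g cycle] a] .
  show thesis
  proof (cases "k = 1")
    case True
    then have "g = D 0 \<cdot> (\<ominus> a)" using cone_cycle_lift_first[OF mono, of W g a] g a c by simp
    then show thesis using that[of "\<ominus> a"] neg_hom[OF a(1)] K_0 True by simp
  next
    case False
    then have j: "1 \<le> k - 1" "k - 1 < n" "2 \<le> k" and kk: "Suc (k - 1) = k" "k - 1 - 1 = k - 2"
      using k by auto
    have c': "hom W (Y (k - 1)) (p2 k \<cdot> g \<oplus> f (k - 1) \<cdot> a)"
      using comp_hom[OF g K_bp(5)[OF k]] comp_hom[OF a(1) f_hom[of "k - 1"]] k by auto
    obtain b where b: "hom W (Y (k - 2)) b" "p2 k \<cdot> g \<oplus> f (k - 1) \<cdot> a = dY (k - 2) \<cdot> b"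
      using Y_ext_left_factor[OF Y_left j(1,2) c'] c unfolding kk by blast
    have "hom W (K (k - 1)) (i1 (k - 1) \<cdot> (\<ominus> a) \<oplus> i2 (k - 1) \<cdot> b)"
      using K_pair(1)[OF j(1) less_imp_le[OF j(2)] neg_hom[OF a(1)]] b(1) unfolding kk by blast
    then show thesis using that cone_cycle_lift[OF j(3) k(2) g a b] by blast
  qed
qed

lemma cone_left_exact:
  assumes X_left: "left_exact C (Suc n) X dX"
    and mono: "is_mono C (Y 0) (Y 1) (dY 0)"
    and Y_left: "left_exact C (Suc n) Y_ext (dY_ext e)"
    and e: "hom (Y n) (X (Suc n)) e" "e \<cdot> f n = dX n"
  shows "left_exact C (Suc n) K D"
  unfolding left_exact_def
proof (intro conjI cone_complex ballI allI impI)
  fix W g assume "W \<in> Obj C" "g \<in> Hom C W (K 0)" and z: "D 0 \<cdot> g = zer C W (K 1)"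
  then have "hom W (K 0) g" using homI K_obj[of 0] by simp
  then show "g = zer C W (K 0)" using mono_cancel_zero[OF D0_mono[OF X_left] D0_hom _ z] by simp
next
  fix W k g assume W: "W \<in> Obj C" and k: "1 \<le> k \<and> k < Suc n" and g0: "g \<in> Hom C W (K k)"
    and cycle: "D k \<cdot> g = zer C W (K (Suc k))"
  have k1: "1 \<le> k" "k \<le> n" using k by auto
  have g: "hom W (K k) g" using homI[OF W K_obj g0] k by simp
  obtain h where "hom W (K (k - 1)) h" "g = D (k - 1) \<cdot> h"
    using cone_cycle_is_boundary[OF X_left mono Y_left e k1 g cycle] .
  then show "\<exists>h\<in>Hom C W (K (k - 1)). g = D (k - 1) \<cdot> h" using homD by blast
qed

section \<open>Right exactness and the extended sequence\<close>

lemma D_mid_in2: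
  assumes k: "1 \<le> k" "k < n"
  shows "D k \<cdot> i2 k = i2 (Suc k) \<cdot> dY (k - 1)"
proof -
  have k': "1 \<le> Suc k" "Suc k \<le> n" using k by auto
  have i: "hom (Y (k - 1)) (K k) (i2 k)" using K_bp(3)[of k] k by simp
  have hdY: "hom (Y (k - 1)) (Y k) (dY (k - 1))" and Yk: "Y (k - 1) \<in> Obj C"
    using dY_hom[of "k - 1"] Y_obj k by auto
  note bk = biproduct[OF X_obj[of k] Y_obj[of "k - 1"]] and bS = biproduct[OF X_obj[of "Suc k"] Y_obj[of k]]
  note KS = K_bp[OF k', simplified]
  show ?thesis
  proof (rule K_ext[OF k'])
    show "hom (Y (k - 1)) (K (Suc k)) (D k \<cdot> i2 k)" using comp_hom[OF i D_hom[of k]] k by simp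
    show "hom (Y (k - 1)) (K (Suc k)) (i2 (Suc k) \<cdot> dY (k - 1))" using comp_hom[OF hdY KS(3)] by simp
    have "p1 (Suc k) \<cdot> (D k \<cdot> i2 k) = \<ominus> (dX k \<cdot> zer C (Y (k - 1)) (X k))"
      using D_mid_comp(1)[OF k i] bk k by simp
    also have "\<dots> = zer C (Y (k - 1)) (X (Suc k))"
      using comp_zero_right[OF dX_hom Yk] neg_zero[OF Yk X_obj[of "Suc k"]] k by simp
    also have "\<dots> = p1 (Suc k) \<cdot> (i2 (Suc k) \<cdot> dY (k - 1))"
      using comp_assoc[OF hdY KS(3) KS(4)] bS comp_zero_left[OF hdY X_obj[of "Suc k"]] k by simp
    finally show "p1 (Suc k) \<cdot> (D k \<cdot> i2 k) = p1 (Suc k) \<cdot> (i2 (Suc k) \<cdot> dY (k - 1))" .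
    have "p2 (Suc k) \<cdot> (D k \<cdot> i2 k) = f k \<cdot> zer C (Y (k - 1)) (X k) \<oplus> dY (k - 1) \<cdot> idm C (Y (k - 1))"
      using D_mid_comp(2)[OF k i] bk k by simp
    also have "\<dots> = dY (k - 1)"
      using comp_zero_right[OF f_hom Yk] comp_id_right[OF hdY] add_zero_left[OF hdY] k by simp
    also have "\<dots> = p2 (Suc k) \<cdot> (i2 (Suc k) \<cdot> dY (k - 1))"
      using comp_assoc[OF hdY KS(3) KS(5)] bS comp_id_left[OF hdY] k by simp
    finally show "p2 (Suc k) \<cdot> (D k \<cdot> i2 k) = p2 (Suc k) \<cdot> (i2 (Suc k) \<cdot> dY (k - 1))" .
  qed
qed

text \<open>The map \<open>d\<^sub>Y\<^sup>n\<close> is obtained by factoring \<open>dX n \<cdot> p1 n\<close>, which vanishes on the image of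
\<open>D (n - 1)\<close>, through the last cone differential \<open>D n = [f n, dY (n - 1)]\<close>.\<close>

lemma cone_right_exact_extension:
  assumes R: "right_exact C (Suc n) K D"
  obtains e where "hom (Y n) (X (Suc n)) e" "e \<cdot> f n = dX n"
    "e \<cdot> dY (n - 1) = zer C (Y (n - 1)) (X (Suc n))"
proof -
  have p1: "hom (K n) (X n) (p1 n)" and i1: "hom (X n) (K n) (i1 n)" and i2: "hom (Y (n - 1)) (K n) (i2 n)"
    using K_bp[OF n_pos order.refl] by auto
  have hdX: "hom (X n) (X (Suc n)) (dX n)" using dX_hom by simp
  have sn: "Suc (n - 1) = n" using n_pos by simp
  have Dp: "hom (K (n - 1)) (K n) (D (n - 1))" using D_hom[of "n - 1"] sn by simp
  have i: "hom (K (n - 1)) (K (n - 1)) (idm C (K (n - 1)))" using K_obj[of "n - 1"] by auto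
  have "(dX n \<cdot> p1 n) \<cdot> D (n - 1) = dX n \<cdot> (p1 n \<cdot> (D (n - 1) \<cdot> idm C (K (n - 1))))"
    using comp_assoc[OF Dp p1 hdX] comp_id_right[OF Dp] by simp
  also have "\<dots> = zer C (K (n - 1)) (X (Suc n))"
    using dX_pr1_D_zero[of "n - 1", OF _ i] sn n_pos by simp
  finally obtain h where h: "hom (K (Suc n)) (X (Suc n)) h" and factor: "dX n \<cdot> p1 n = h \<cdot> D n"
    using right_exact_factor[OF R n_pos _ comp_hom[OF p1 hdX]] by auto
  have "h \<cdot> f n = dX n \<cdot> (p1 n \<cdot> i1 n)"
    using comp_assoc[OF i1 D_last_in(3) h] D_last_in(1) factor comp_assoc[OF i1 p1 hdX] by simp
  also have "\<dots> = dX n" using biproduct[OF X_obj[of n] Y_obj[of "n - 1"]] comp_id_right[OF hdX] by simp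
  finally have "h \<cdot> f n = dX n" .
  moreover have "h \<cdot> dY (n - 1) = dX n \<cdot> (p1 n \<cdot> i2 n)"
    using comp_assoc[OF i2 D_last_in(3) h] D_last_in(2) factor comp_assoc[OF i2 p1 hdX] by simp
  moreover have "dX n \<cdot> (p1 n \<cdot> i2 n) = zer C (Y (n - 1)) (X (Suc n))"
    using biproduct[OF X_obj[of n] Y_obj[of "n - 1"]] comp_zero_right[OF hdX Y_obj[of "n - 1"]] by simp
  ultimately show ?thesis using that h K_last by simp
qed

lemma D_last_epi:
  assumes X_right: "right_exact C (Suc n) X dX"
    and Y_right: "right_exact C (Suc n) Y_ext (dY_ext e)"
    and e: "hom (Y n) (X (Suc n)) e" "e \<cdot> f n = dX n"
  shows "is_epi C (K n) (K (Suc n)) (D n)"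
proof (rule epi_if_cancel_zero[OF D_last_in(3)])
  fix W g assume g': "hom (K (Suc n)) W g" and z: "g \<cdot> D n = zer C (K n) W"
  have g: "hom (Y n) W g" and W: "W \<in> Obj C" using g' K_last homD by auto
  have nn: "n < Suc n" "n - 1 \<noteq> n" "n - 1 \<noteq> Suc n" using n_pos by auto
  have i1: "hom (X n) (K n) (i1 n)" and i2: "hom (Y (n - 1)) (K n) (i2 n)"
    using K_bp[OF n_pos order.refl] by auto
  have "g \<cdot> f n = zer C (X n) W"
    using comp_assoc[OF i1 D_last_in(3) g'] D_last_in(1) z comp_zero_left[OF i1 W] by simp
  moreover have "g \<cdot> dY (n - 1) = zer C (Y (n - 1)) W"
    using comp_assoc[OF i2 D_last_in(3) g'] D_last_in(2) z comp_zero_left[OF i2 W] by simp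
  then obtain h where h: "hom (X (Suc n)) W h" and gh: "g = h \<cdot> e"
    using right_exact_factor[OF Y_right n_pos, of W g] g nn by auto
  ultimately have "h \<cdot> dX n = zer C (X n) W" using comp_assoc[OF f_hom e(1) h] e(2) by simp
  then have "h = zer C (X (Suc n)) W" using right_exact_last_zero[OF X_right h] by simp
  then show "g = zer C (K (Suc n)) W" using gh comp_zero_left[OF e(1) W] K_last by simp
qed

lemma Y_ext_complex:
  assumes e: "hom (Y n) (X (Suc n)) e" "e \<cdot> dY (n - 1) = zer C (Y (n - 1)) (X (Suc n))"
  shows "is_complex C (Suc n) Y_ext (dY_ext e)"
  unfolding is_complex_def
proof (intro conjI allI impI)
  fix k assume "k \<le> Suc n"
  then show "Y_ext k \<in> Obj C" using Y_obj X_obj by auto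
next
  fix k assume "k < Suc n"
  then show "dY_ext e k \<in> Hom C (Y_ext k) (Y_ext (Suc k))"
    using e(1) dY_hom[of k] homD by (cases "k = n") auto
next
  fix k assume "Suc k < Suc n"
  then show "dY_ext e (Suc k) \<cdot> dY_ext e k = zer C (Y_ext k) (Y_ext (Suc (Suc k)))"
    using e(2) dY_dY[of k] by (cases "Suc k = n") auto
qed

lemma Y_cocycle_factor_X:
  assumes X_right: "right_exact C (Suc n) X dX" and k: "1 \<le> k" "k \<le> n"
    and b: "hom (Y k) W b" "b \<cdot> dY (k - 1) = zer C (Y (k - 1)) W"
  obtains a where "hom (X (Suc k)) W a" "b \<cdot> f k = a \<cdot> dX k"
proof -
  have W: "W \<in> Obj C" using b homD by blast
  have hf: "hom (X k) (Y k) (f k)" and hf': "hom (X (k - 1)) (Y (k - 1)) (f (k - 1))"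
    and hdX: "hom (X (k - 1)) (X k) (dX (k - 1))" and hdY: "hom (Y (k - 1)) (Y k) (dY (k - 1))"
    using f_hom dX_hom[of "k - 1"] dY_hom[of "k - 1"] k by auto
  have "(b \<cdot> f k) \<cdot> dX (k - 1) = b \<cdot> (dY (k - 1) \<cdot> f (k - 1))"
    using comp_assoc[OF hdX hf b(1)] f_comm[of "k - 1"] k by simp
  also have "\<dots> = zer C (X (k - 1)) W"
    using comp_assoc[OF hf' hdY b(1)] b(2) comp_zero_left[OF hf' W] by simp
  finally show thesis
    using right_exact_factor[OF X_right k(1) _ comp_hom[OF hf b(1)]] that k by auto
qed

lemma copair_D_mid_zero:
  assumes k: "1 \<le> k" "k < n" and a: "hom (X (Suc k)) W a"
    and b: "hom (Y k) W b" "b \<cdot> dY (k - 1) = zer C (Y (k - 1)) W" "b \<cdot> f k = a \<cdot> dX k"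
  shows "(a \<cdot> p1 (Suc k) \<oplus> b \<cdot> p2 (Suc k)) \<cdot> D k = zer C (K k) W"
proof -
  have W: "W \<in> Obj C" using a homD by blast
  note KS = K_bp[of "Suc k", simplified] and Kk = K_bp[OF k(1) less_imp_le[OF k(2)]]
  have ps: "hom (K (Suc k)) (X (Suc k)) (p1 (Suc k))" "hom (K (Suc k)) (Y k) (p2 (Suc k))"
    using KS k by auto
  have hdX: "hom (X k) (X (Suc k)) (dX k)" and hf: "hom (X k) (Y k) (f k)"
    and hdY: "hom (Y (k - 1)) (Y k) (dY (k - 1))" using dX_hom f_hom dY_hom[of "k - 1"] k by auto
  have Dk: "hom (K k) (K (Suc k)) (D k)" using D_hom k by simp
  define x where "x = (a \<cdot> dX k) \<cdot> p1 k"
  have x: "hom (K k) W x" using x_def Kk hdX a by auto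
  have "(a \<cdot> p1 (Suc k) \<oplus> b \<cdot> p2 (Suc k)) \<cdot> D k = a \<cdot> (p1 (Suc k) \<cdot> D k) \<oplus> b \<cdot> (p2 (Suc k) \<cdot> D k)"
    using comp_distrib_right[OF Dk comp_hom[OF ps(1) a] comp_hom[OF ps(2) b(1)]]
      comp_assoc[OF Dk ps(1) a] comp_assoc[OF Dk ps(2) b(1)] by simp
  also have "\<dots> = a \<cdot> ((\<ominus> dX k) \<cdot> p1 k) \<oplus> b \<cdot> (f k \<cdot> p1 k \<oplus> dY (k - 1) \<cdot> p2 k)"
    using pr_D_mid[OF k] by simp
  also have "\<dots> = (a \<cdot> (\<ominus> dX k)) \<cdot> p1 k \<oplus> ((b \<cdot> f k) \<cdot> p1 k \<oplus> (b \<cdot> dY (k - 1)) \<cdot> p2 k)"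
    using comp_assoc[OF Kk(4) neg_hom[OF hdX] a] comp_distrib_left[OF comp_hom[OF Kk(4) hf] comp_hom[OF Kk(5) hdY] b(1)]
      comp_assoc[OF Kk(4) hf b(1)] comp_assoc[OF Kk(5) hdY b(1)] by simp
  also have "\<dots> = \<ominus> x \<oplus> (x \<oplus> zer C (K k) W)"
    using comp_neg[OF hdX a] neg_comp[OF Kk(4) comp_hom[OF hdX a]] x_def b(2,3) comp_zero_left[OF Kk(5) W]
    by simp
  also have "\<dots> = zer C (K k) W" using x by (simp add: add_zero_right add_neg_left)
  finally show ?thesis .
qed

lemma Y_ext_factor_mid:
  assumes R: "right_exact C (Suc n) K D" and k: "1 \<le> k" "k < n" and a: "hom (X (Suc k)) W a"
    and b: "hom (Y k) W b" "b \<cdot> dY (k - 1) = zer C (Y (k - 1)) W" "b \<cdot> f k = a \<cdot> dX k"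
  obtains h where "hom (Y_ext (Suc k)) W h" "b = h \<cdot> dY_ext e k"
proof -
  have k': "1 \<le> Suc k" "Suc k \<le> n" using k by auto
  note KS = K_bp[OF k', simplified]
  define G where "G = a \<cdot> p1 (Suc k) \<oplus> b \<cdot> p2 (Suc k)"
  have G: "hom (K (Suc k)) W G" using G_def KS a b by auto
  have "G \<cdot> D (Suc k - 1) = zer C (K (Suc k - 1)) W" using copair_D_mid_zero[OF k a b] G_def by simp
  then obtain h where h: "hom (K (Suc (Suc k))) W h" and Gh: "G = h \<cdot> D (Suc k)"
    using right_exact_factor[OF R k'(1) _ G] k' by auto
  have DS: "hom (K (Suc k)) (K (Suc (Suc k))) (D (Suc k))" using D_hom k' by simp
  have "b = G \<cdot> i2 (Suc k)" using copair_in(2)[OF X_obj[of "Suc k"] Y_obj[of k] a b(1)] G_def k' by simp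
  then have bh: "b = h \<cdot> (D (Suc k) \<cdot> i2 (Suc k))" using Gh comp_assoc[OF KS(3) DS h] by simp
  show thesis
  proof (cases "Suc k = n")
    case True
    then show thesis using that[of h] bh D_last_in(2) h K_last by auto
  next
    case False
    then have k2: "1 \<le> Suc k" "Suc k < n" using k' by auto
    have i2: "hom (Y (Suc k)) (K (Suc (Suc k))) (i2 (Suc (Suc k)))" using K_bp(3)[of "Suc (Suc k)"] k2 by simp
    have "b = (h \<cdot> i2 (Suc (Suc k))) \<cdot> dY k"
      using bh D_mid_in2[OF k2] comp_assoc[OF dY_hom[of k] i2 h] k by simp
    then show thesis using that[of "h \<cdot> i2 (Suc (Suc k))"] comp_hom[OF i2 h] False k by simp
  qed
qed

lemma Y_ext_factor_last:
  assumes R: "right_exact C (Suc n) K D"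
    and e: "hom (Y n) (X (Suc n)) e" "e \<cdot> f n = dX n" "e \<cdot> dY (n - 1) = zer C (Y (n - 1)) (X (Suc n))"
    and a: "hom (X (Suc n)) W a"
    and b: "hom (Y n) W b" "b \<cdot> dY (n - 1) = zer C (Y (n - 1)) W" "b \<cdot> f n = a \<cdot> dX n"
  shows "b = a \<cdot> e"
proof -
  have W: "W \<in> Obj C" using a homD by blast
  define u where "u = b \<oplus> \<ominus> (a \<cdot> e)"
  have ae: "hom (Y n) W (a \<cdot> e)" using comp_hom[OF e(1) a] .
  have u: "hom (Y n) W u" using u_def ae b by auto
  have p: "hom (K n) (X n) (p1 n)" "hom (K n) (Y (n - 1)) (p2 n)" using K_bp[OF n_pos order.refl] by auto
  have hf: "hom (X n) (Y n) (f n)" and hdY: "hom (Y (n - 1)) (Y n) (dY (n - 1))"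
    using f_hom dY_hom[of "n - 1"] n_pos by auto
  have uf: "u \<cdot> f n = zer C (X n) W"
    using comp_distrib_right[OF hf b(1) neg_hom[OF ae]] neg_comp[OF hf ae] u_def b(3)
      comp_assoc[OF hf e(1) a] e(2) add_neg_right[OF comp_hom[OF dX_hom a]] by simp
  have ud: "u \<cdot> dY (n - 1) = zer C (Y (n - 1)) W"
    using comp_distrib_right[OF hdY b(1) neg_hom[OF ae]] neg_comp[OF hdY ae] u_def b(2)
      comp_assoc[OF hdY e(1) a] e(3) comp_zero_right[OF a Y_obj[of "n - 1"]] neg_zero[OF Y_obj[of "n - 1"] W]
      add_zero_right[OF zer_hom[OF Y_obj[of "n - 1"] W]] by simp
  have "u \<cdot> D n = (u \<cdot> f n) \<cdot> p1 n \<oplus> (u \<cdot> dY (n - 1)) \<cdot> p2 n"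
    using D_last comp_distrib_left[OF comp_hom[OF p(1) hf] comp_hom[OF p(2) hdY] u]
      comp_assoc[OF p(1) hf u] comp_assoc[OF p(2) hdY u] by simp
  also have "\<dots> = zer C (K n) W"
    using uf ud comp_zero_left[OF p(1) W] comp_zero_left[OF p(2) W] add_zero_right[OF zer_hom[OF K_obj W]]
    by simp
  finally have "u = zer C (K (Suc n)) W" using right_exact_last_zero[OF R, of W u] u K_last by simp
  then show ?thesis using eq_if_diff_zero[OF b(1) ae] u_def K_last by simp
qed

lemma Y_ext_right_exact:
  assumes R: "right_exact C (Suc n) K D" and X_right: "right_exact C (Suc n) X dX"
    and e: "hom (Y n) (X (Suc n)) e" "e \<cdot> f n = dX n" "e \<cdot> dY (n - 1) = zer C (Y (n - 1)) (X (Suc n))"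
  shows "right_exact C (Suc n) Y_ext (dY_ext e)"
  unfolding right_exact_def
proof (intro conjI Y_ext_complex[OF e(1,3)] ballI allI impI)
  fix W g assume W: "W \<in> Obj C" and "g \<in> Hom C (Y_ext (Suc n)) W"
    and "g \<cdot> dY_ext e (Suc n - 1) = zer C (Y_ext (Suc n - 1)) W"
  then have g: "hom (X (Suc n)) W g" and z: "g \<cdot> e = zer C (Y n) W" using homI X_obj by auto
  have "g \<cdot> dX n = zer C (X n) W"
    using comp_assoc[OF f_hom e(1) g] e(2) z comp_zero_left[OF f_hom W] by simp
  then show "g = zer C (Y_ext (Suc n)) W" using right_exact_last_zero[OF X_right g] by simp
next
  fix W k b assume W: "W \<in> Obj C" and k: "1 \<le> k \<and> k < Suc n" and b0: "b \<in> Hom C (Y_ext k) W"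
    and z: "b \<cdot> dY_ext e (k - 1) = zer C (Y_ext (k - 1)) W"
  have k1: "1 \<le> k" "k \<le> n" and nk: "k - 1 \<noteq> n" "k - 1 \<noteq> Suc n" "k \<noteq> Suc n" using k by auto
  have b: "hom (Y k) W b" "b \<cdot> dY (k - 1) = zer C (Y (k - 1)) W"
    using homI[OF Y_obj[OF k1(2)] W] b0 z nk by simp_all
  obtain a where a: "hom (X (Suc k)) W a" "b \<cdot> f k = a \<cdot> dX k"
    using Y_cocycle_factor_X[OF X_right k1 b] .
  show "\<exists>h\<in>Hom C (Y_ext (Suc k)) W. b = h \<cdot> dY_ext e k"
  proof (cases "k < n")
    case True
    then show ?thesis using Y_ext_factor_mid[OF R k1(1) True a(1) b a(2)] homD by metis
  next
    case False
    then have kn: "k = n" using k1 by simp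
    have "b = a \<cdot> e" using Y_ext_factor_last[OF R e a(1)[unfolded kn] b[unfolded kn] a(2)[unfolded kn]] .
    then show ?thesis using a(1) homD kn by auto
  qed
qed

lemma cone_pushout_extension:
  assumes "n_abelian C n" and X_right: "right_exact C (Suc n) X dX"
    and mono: "is_mono C (Y 0) (Y 1) (dY 0)" and "n_pushout C n X dX Y dY f"
  shows "\<exists>e\<in>Hom C (Y n) (X (Suc n)). e \<cdot> f n = dX n \<and> n_exact C n Y_ext (dY_ext e)"
proof -
  have R: "right_exact C (Suc n) K D" using assms(4) by (simp add: n_pushout_def right_n_exact_def)
  obtain e where e: "hom (Y n) (X (Suc n)) e" "e \<cdot> f n = dX n"
    "e \<cdot> dY (n - 1) = zer C (Y (n - 1)) (X (Suc n))"
    using cone_right_exact_extension[OF R] .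
  have "is_mono C (Y_ext 0) (Y_ext 1) (dY_ext e 0)" using mono n_pos by simp
  then have "n_exact C n Y_ext (dY_ext e)"
    using n_exact_if_mono_right_exact[of C n Y_ext "dY_ext e", OF assms(1)] Y_ext_right_exact[OF R X_right e]
    by (simp add: right_n_exact_def)
  then show ?thesis using e homD by blast
qed

lemma cone_exact_if_extension:
  assumes "n_abelian C n" and X_left: "left_exact C (Suc n) X dX" and X_right: "right_exact C (Suc n) X dX"
    and mono: "is_mono C (Y 0) (Y 1) (dY 0)"
    and "\<exists>e\<in>Hom C (Y n) (X (Suc n)). e \<cdot> f n = dX n \<and> n_exact C n Y_ext (dY_ext e)"
  shows "n_exact C n K D"
proof -
  obtain e where e0: "e \<in> Hom C (Y n) (X (Suc n))" and ef: "e \<cdot> f n = dX n"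
    and "n_exact C n Y_ext (dY_ext e)"
    using assms(5) by blast
  then have Y_left: "left_exact C (Suc n) Y_ext (dY_ext e)"
    and Y_right: "right_exact C (Suc n) Y_ext (dY_ext e)"
    unfolding n_exact_def left_n_exact_def right_n_exact_def by auto
  have e: "hom (Y n) (X (Suc n)) e" "e \<cdot> f n = dX n"
    using homI[OF Y_obj X_obj e0] ef by simp_all
  show ?thesis
    using n_exact_if_epi_left_exact[of C n K D, OF assms(1) D_last_epi[OF X_right Y_right e]]
      cone_left_exact[OF X_left mono Y_left e] by (simp add: left_n_exact_def)
qed

end

theorem mainTheorem12:
  fixes C :: "('o, 'm) addcat" and n :: nat
    and X Y :: "nat \<Rightarrow> 'o" and dX dY f :: "nat \<Rightarrow> 'm"
  assumes "1 \<le> n"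
    and "n_abelian C n"
    and "n_exact C n X dX"
    and "is_complex C n Y dY"
    and "is_mono C (Y 0) (Y 1) (dY 0)"
    and "is_complex_morphism C n X dX Y dY f"
  shows "(n_pushout C n X dX Y dY f \<longleftrightarrow> n_exact C n (cone_obj C n X Y) (cone_diff C n X dX Y dY f)) \<and>
         (n_exact C n (cone_obj C n X Y) (cone_diff C n X dX Y dY f) \<longleftrightarrow>
            n_pushout C n X dX Y dY f \<and> n_pullback C n X dX Y dY f) \<and>
         (n_pushout C n X dX Y dY f \<and> n_pullback C n X dX Y dY f \<longleftrightarrow>
            (\<exists>e\<in>Hom C (Y n) (X (Suc n)). cmp C e (f n) = dX n \<and>
               n_exact C n (Y(Suc n := X (Suc n))) (dY(n := e))))"
proof -
  have X_left: "left_exact C (Suc n) X dX" and X_right: "right_exact C (Suc n) X dX"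
    using assms(3) unfolding n_exact_def left_n_exact_def right_n_exact_def by auto
  interpret mapping_cone C n X Y dX dY f
    using assms X_left unfolding n_abelian_def left_exact_def by unfold_locales auto
  have exact_iff: "n_exact C n K D \<longleftrightarrow> n_pushout C n X dX Y dY f \<and> n_pullback C n X dX Y dY f"
    unfolding n_exact_def n_pushout_def n_pullback_def by blast
  have pushout_exact: "n_pushout C n X dX Y dY f \<Longrightarrow> n_exact C n K D"
    unfolding n_pushout_def by (rule n_exact_if_mono_right_exact[of C n K D, OF assms(2) D0_mono[OF X_left]])
  show ?thesis
    using exact_iff pushout_exact cone_pushout_extension[OF assms(2) X_right assms(5)]
      cone_exact_if_extension[OF assms(2) X_left X_right assms(5)] by blast
qed

end
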